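(* Let $K$ be a non-trivial torus knot and let $g$ be any non-trivial element of $G(K)$. Then there exists a constant $N_g>0$ such that $p_{1/n}(g)\ne1$ in $\pi_1(K(1/n))$ for all integers $n\ge N_g$.
   Context: $G(K)=\pi_1(E(K))$, where $E(K)$ is the exterior of $K$. With $(\mu,\lambda)$ a preferred meridian–longitude pair, $K(1/n)$ is the closed $3$-manifold obtained from $E(K)$ by attaching a solid torus with meridian glued to a curve representing $\mu\lambda^n$, and $p_{1/n}\colon G(K)\to\pi_1(K(1/n))$ is the induced epimorphism. *)

theory Defs
  imports Main
begin

text \<open>Words in a free group over generators of type 'a: a letter is (sign, generator),
  sign True = the generator, sign False = its inverse.\<close>

type_synonym 'a word = "(bool \<times> 'a) list"

definition inv_word :: "'a word \<Rightarrow> 'a word" where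
  "inv_word w = rev (map (\<lambda>(b, x). (\<not> b, x)) w)"

definition word_pow :: "'a word \<Rightarrow> int \<Rightarrow> 'a word" where
  "word_pow w n = (if 0 \<le> n then concat (replicate (nat n) w)
                   else concat (replicate (nat (- n)) (inv_word w)))"

inductive pres_eq :: "'a word set \<Rightarrow> 'a word \<Rightarrow> 'a word \<Rightarrow> bool" for R where
  refl: "pres_eq R w w"
| sym: "pres_eq R u v \<Longrightarrow> pres_eq R v u"
| trans: "pres_eq R u v \<Longrightarrow> pres_eq R v w \<Longrightarrow> pres_eq R u w"
| cancel: "pres_eq R (u @ [(b, x), (\<not> b, x)] @ v) (u @ v)"
| relator: "r \<in> R \<Longrightarrow> pres_eq R (u @ r @ v) (u @ v)"

definition trivial_in :: "'a word set \<Rightarrow> 'a word \<Rightarrow> bool" where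
  "trivial_in R w \<longleftrightarrow> pres_eq R w []"

text \<open>Torus knot T(p,q) group: generators x (= False) and y (= True), G = < x, y | x^p = y^q >.\<close>

definition gen_x :: "bool word" where "gen_x = [(True, False)]"
definition gen_y :: "bool word" where "gen_y = [(True, True)]"

definition torus_relators :: "int \<Rightarrow> int \<Rightarrow> bool word set" where
  "torus_relators p q = {word_pow gen_x p @ inv_word (word_pow gen_y q)}"

text \<open>Meridian: y^c x^d where p c + q d = 1 (well defined in G up to the relation,
  since x^p = y^q is central).\<close>
definition torus_meridian :: "int \<Rightarrow> int \<Rightarrow> bool word" where
  "torus_meridian p q = (let (c, d) = (SOME (c, d). p * c + q * d = 1)
                          in word_pow gen_y c @ word_pow gen_x d)"

definition torus_longitude :: "int \<Rightarrow> int \<Rightarrow> bool word" where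
  "torus_longitude p q = word_pow gen_x p @ word_pow (torus_meridian p q) (- (p * q))"

definition surgery_relators :: "int \<Rightarrow> int \<Rightarrow> int \<Rightarrow> bool word set" where
  "surgery_relators p q n = torus_relators p q \<union>
     {torus_meridian p q @ word_pow (torus_longitude p q) n}"

definition nontrivial_torus :: "int \<Rightarrow> int \<Rightarrow> bool" where
  "nontrivial_torus p q \<longleftrightarrow> coprime p q \<and> \<bar>p\<bar> \<ge> 2 \<and> \<bar>q\<bar> \<ge> 2"

end

theory Submission
  imports Defs "HOL-Analysis.Analysis"
begin

text \<open>
  \<open>G(K) = \<langle>x, y | x\<^sup>p = y\<^sup>q\<rangle>\<close> has a family of representations \<open>\<rho>\<^sub>t\<close> (\<open>t > 0\<close>) into the
  universal cover of \<open>PSL(2, \<real>)\<close>, realised as lifts to \<open>\<real>\<close> of the action of \<open>SL(2, \<real>)\<close> on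
  directions: \<open>x\<close> acts as the rotation by \<open>Z \<pi> / p\<close>, \<open>y\<close> as the rotation by \<open>Z \<pi> / q\<close>
  conjugated by \<open>diag(t, 1)\<close>, so that \<open>x\<^sup>p = y\<^sup>q\<close> acts as the central translation by \<open>Z \<pi>\<close>.
  For all large \<open>n\<close> the intermediate value theorem gives \<open>t\<^sub>n\<close> for which the meridian \<open>\<mu>\<close> acts
  as a conjugate of the translation by \<open>\<psi>\<^sub>n\<close> with \<open>(p q n - 1) \<psi>\<^sub>n = n Z \<pi>\<close>; then \<open>\<rho>\<^sub>t\<close> with \<open>t = t\<^sub>n\<close> kills
  \<open>\<mu> \<lambda>\<^sup>n\<close>, so it factors through \<open>\<pi>\<^sub>1(K(1/n))\<close>, and \<open>n \<mapsto> t\<^sub>n\<close> is injective.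

  Write \<open>g = z\<^sup>k b\<^sub>1 \<dots> b\<^sub>m\<close> in normal form, with \<open>z = x\<^sup>p\<close> central and \<open>b\<^sub>i\<close> alternating
  powers of \<open>x\<close> and \<open>y\<close>. If \<open>\<rho>\<^sub>t(g) = 1\<close>, the lift of \<open>b\<^sub>1 \<dots> b\<^sub>m\<close> is a translation by a multiple
  of \<open>\<pi>\<close>, so its matrix is scalar. Up to a power of \<open>t\<close> this matrix is a polynomial in \<open>t\<close>
  whose leading coefficient is not scalar; hence \<open>\<rho>\<^sub>t(g) = 1\<close> for finitely many \<open>t\<close> only
  (for none if \<open>m = 0\<close>, as \<open>g \<noteq> 1\<close>), and \<open>g\<close> survives in \<open>\<pi>\<^sub>1(K(1/n))\<close> for all large \<open>n\<close>.
\<close>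

section \<open>Words, presentations and homomorphisms\<close>

lemma inv_word_inv_word [simp]: "inv_word (inv_word w) = w"
  by (induction w) (auto simp: inv_word_def)

lemma inv_word_replicate: "inv_word (replicate n (b, v)) = replicate n (\<not> b, v)"
  by (simp add: inv_word_def)

lemma concat_replicate_snoc: "concat (replicate n w) @ w = concat (replicate (Suc n) w)"
  by (induction n) auto

lemma word_pow_letter:
  "word_pow [(b, v)] k = (if 0 \<le> k then replicate (nat k) (b, v) else replicate (nat (- k)) (\<not> b, v))"
proof -
  have "concat (replicate n [l]) = replicate n l" for n and l :: "bool \<times> 'a"
    by (induction n) auto
  then show ?thesis by (simp add: word_pow_def inv_word_def)
qed

locale word_hom =
  fixes mul :: "'b \<Rightarrow> 'b \<Rightarrow> 'b" and one :: 'b and gen :: "bool \<Rightarrow> 'a \<Rightarrow> 'b"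
  assumes mul_assoc: "mul (mul a b) c = mul a (mul b c)"
    and one_mul: "mul one a = a" and mul_one: "mul a one = a"
    and gen_mul_inverse: "mul (gen s v) (gen (\<not> s) v) = one"
begin

fun word_eval :: "'a word \<Rightarrow> 'b" where
  "word_eval [] = one"
| "word_eval (l # w) = mul (gen (fst l) (snd l)) (word_eval w)"

lemma word_eval_append: "word_eval (u @ v) = mul (word_eval u) (word_eval v)"
  by (induction u) (auto simp: one_mul mul_assoc)

lemma word_eval_letter: "word_eval [(s, v)] = gen s v"
  by (simp add: mul_one)

lemma word_eval_pres_eq:
  assumes "pres_eq R u v" and "\<And>r. r \<in> R \<Longrightarrow> word_eval r = one"
  shows "word_eval u = word_eval v"
  using assms(1)
proof (induction rule: pres_eq.induct)
  case (cancel u s x v)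
  have "word_eval ([(s, x), (\<not> s, x)] @ v) = word_eval v"
    by (simp add: gen_mul_inverse mul_assoc[symmetric] one_mul)
  then show ?case by (simp add: word_eval_append)
next
  case (relator r u v)
  then show ?case by (simp add: assms(2) word_eval_append one_mul)
qed auto

lemma word_eval_inv_word: "mul (word_eval w) (word_eval (inv_word w)) = one"
proof (induction w)
  case Nil
  then show ?case by (simp add: inv_word_def one_mul)
next
  case (Cons l w)
  obtain s v where l: "l = (s, v)" by (cases l)
  have "inv_word (l # w) = inv_word w @ [(\<not> s, v)]"
    by (simp add: inv_word_def l)
  then have "mul (word_eval (l # w)) (word_eval (inv_word (l # w)))
      = mul (gen s v) (mul (mul (word_eval w) (word_eval (inv_word w))) (gen (\<not> s) v))"
    by (simp add: l word_eval_append mul_one mul_assoc)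
  also have "\<dots> = one"
    using Cons by (simp add: one_mul gen_mul_inverse)
  finally show ?case .
qed

context
  fixes C :: "real \<Rightarrow> 'b"
  assumes C_add: "\<And>a b. mul (C a) (C b) = C (a + b)" and C_0: "C 0 = one"
begin

lemma word_eval_inv_word_param:
  assumes "word_eval u = C s"
  shows "word_eval (inv_word u) = C (- s)"
proof -
  have "word_eval (inv_word u) = mul (mul (C (- s)) (C s)) (word_eval (inv_word u))"
    by (simp add: C_add C_0 one_mul)
  also have "\<dots> = C (- s)"
    using assms word_eval_inv_word[of u] by (simp add: mul_assoc mul_one)
  finally show ?thesis .
qed

lemma word_eval_concat_replicate_param:
  assumes "word_eval u = C s"
  shows "word_eval (concat (replicate n u)) = C (real n * s)"
  by (induction n) (simp_all add: C_0 word_eval_append assms C_add algebra_simps)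

lemma word_eval_word_pow_param:
  assumes "word_eval u = C s"
  shows "word_eval (word_pow u k) = C (of_int k * s)"
  using word_eval_concat_replicate_param[OF assms, of "nat k"]
    word_eval_concat_replicate_param[OF word_eval_inv_word_param[OF assms], of "nat (- k)"]
  by (simp add: word_pow_def)

end

end

lemmas pres_eq_trans [trans] = pres_eq.trans

lemma pres_eq_cong: "pres_eq R u v \<Longrightarrow> pres_eq R (a @ u @ b) (a @ v @ b)"
proof (induction rule: pres_eq.induct)
  case (refl w)
  show ?case by (rule pres_eq.refl)
next
  case (sym u v)
  show ?case using sym.IH by (rule pres_eq.sym)
next
  case (trans u v w)
  show ?case using trans.IH by (rule pres_eq.trans)
next
  case (cancel u s x v)
  show ?case
    using pres_eq.cancel[of R "a @ u" s x "v @ b"] by simp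
next
  case (relator r u v)
  show ?case
    using pres_eq.relator[OF relator, of "a @ u" "v @ b"] by simp
qed

lemma pres_eq_append_left: "pres_eq R u v \<Longrightarrow> pres_eq R (a @ u) (a @ v)"
  using pres_eq_cong[of R u v a "[]"] by simp

lemma pres_eq_append_right: "pres_eq R u v \<Longrightarrow> pres_eq R (u @ b) (v @ b)"
  using pres_eq_cong[of R u v "[]" b] by simp

lemma pres_eq_relator: "r \<in> R \<Longrightarrow> pres_eq R r []"
  using pres_eq.relator[of r R "[]" "[]"] by simp

lemma pres_eq_cancel_right: "pres_eq R (u @ [(s, x), (\<not> s, x)]) u"
  using pres_eq.cancel[of R u s x "[]"] by simp

lemma pres_eq_inv_word_right: "pres_eq R (w @ inv_word w) []"
proof (induction w)
  case Nil
  then show ?case by (simp add: inv_word_def pres_eq.refl)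
next
  case (Cons l w)
  obtain s v where l: "l = (s, v)" by (cases l)
  have "(l # w) @ inv_word (l # w) = [l] @ (w @ inv_word w) @ [(\<not> s, v)]"
    by (simp add: inv_word_def l)
  also have "pres_eq R \<dots> ([l] @ [] @ [(\<not> s, v)])"
    by (rule pres_eq_cong[OF Cons])
  also have "pres_eq R \<dots> []"
    using pres_eq_cancel_right[of R "[]" s v] l by simp
  finally show ?case .
qed

lemma pres_eq_inv_word_left: "pres_eq R (inv_word w @ w) []"
  using pres_eq_inv_word_right[of R "inv_word w"] by simp

lemma pres_eq_inv_word_cong:
  assumes "pres_eq R u v"
  shows "pres_eq R (inv_word u) (inv_word v)"
proof -
  have "pres_eq R (inv_word u) (inv_word u @ v @ inv_word v)"
    using pres_eq_append_left[OF pres_eq_inv_word_right[of R v], of "inv_word u"]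
    by (simp add: pres_eq.sym)
  also have "pres_eq R \<dots> (inv_word u @ u @ inv_word v)"
    by (rule pres_eq_cong[OF pres_eq.sym[OF assms]])
  also have "pres_eq R \<dots> (inv_word v)"
    using pres_eq_append_right[OF pres_eq_inv_word_left[of R u], of "inv_word v"] by simp
  finally show ?thesis .
qed

lemma pres_eq_word_pow_succ: "pres_eq R (word_pow w k @ w) (word_pow w (k + 1))"
proof (cases "0 \<le> k")
  case True
  then have "word_pow w k @ w = word_pow w (k + 1)"
    by (simp add: word_pow_def concat_replicate_snoc nat_add_distrib)
  then show ?thesis by (simp add: pres_eq.refl)
next
  case False
  define m where "m = nat (- k - 1)"
  have "word_pow w k @ w = concat (replicate m (inv_word w)) @ (inv_word w @ w)"
    using False concat_replicate_snoc[of m "inv_word w"]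
    by (simp add: word_pow_def m_def Suc_nat_eq_nat_zadd1)
  moreover have "word_pow w (k + 1) = concat (replicate m (inv_word w))"
    using False by (simp add: word_pow_def m_def)
  ultimately show ?thesis
    using pres_eq_append_left[OF pres_eq_inv_word_left[of R w]] by simp
qed

lemma word_pow_inv_word: "word_pow (inv_word w) (- k) = word_pow w k"
  by (simp add: word_pow_def)

lemma pres_eq_word_pow_pred: "pres_eq R (word_pow w k @ inv_word w) (word_pow w (k - 1))"
  using pres_eq_word_pow_succ[of R "inv_word w" "- k"] word_pow_inv_word[of w "k - 1"]
  by (simp add: word_pow_inv_word)

lemma word_pow_zero [simp]: "word_pow w 0 = []"
  and word_pow_one [simp]: "word_pow w 1 = w"
  and word_pow_minus_one [simp]: "word_pow w (- 1) = inv_word w"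
  by (simp_all add: word_pow_def)

lemma pres_eq_word_pow_add_sign:
  assumes "s = 1 \<or> s = - 1"
  shows "pres_eq R (word_pow w k @ word_pow w s) (word_pow w (k + s))"
  using assms pres_eq_word_pow_succ[of R w k] pres_eq_word_pow_pred[of R w k] by auto

lemma pres_eq_commuting_inv_word:
  assumes central: "\<And>w. pres_eq R (z @ w) (w @ z)"
  shows "pres_eq R (inv_word z @ w) (w @ inv_word z)"
proof -
  let ?i = "inv_word z"
  have "pres_eq R (?i @ w) (?i @ (w @ z) @ ?i)"
    using pres_eq_append_left[OF pres_eq_inv_word_right[of R z], of "?i @ w"]
    by (simp add: pres_eq.sym)
  also have "pres_eq R \<dots> (?i @ (z @ w) @ ?i)"
    by (rule pres_eq_cong[OF pres_eq.sym[OF central]])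
  also have "pres_eq R \<dots> (w @ ?i)"
    using pres_eq_append_right[OF pres_eq_inv_word_left[of R z], of "w @ ?i"] by simp
  finally show ?thesis .
qed

lemma pres_eq_commuting_concat_replicate:
  assumes central: "\<And>w. pres_eq R (z @ w) (w @ z)"
  shows "pres_eq R (concat (replicate n z) @ w) (w @ concat (replicate n z))"
proof (induction n)
  case 0
  then show ?case by (simp add: pres_eq.refl)
next
  case (Suc n)
  have "pres_eq R (z @ concat (replicate n z) @ w) (z @ w @ concat (replicate n z))"
    by (rule pres_eq_append_left[OF Suc])
  also have "pres_eq R \<dots> (w @ z @ concat (replicate n z))"
    using pres_eq_append_right[OF central, of w "concat (replicate n z)"] by simp
  finally show ?case by simp
qed

lemma pres_eq_commuting_word_pow:
  assumes "\<And>w. pres_eq R (z @ w) (w @ z)"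
  shows "pres_eq R (word_pow z k @ w) (w @ word_pow z k)"
  using pres_eq_commuting_concat_replicate[OF assms]
    pres_eq_commuting_concat_replicate[OF pres_eq_commuting_inv_word[OF assms]]
  by (simp add: word_pow_def)

lemma pres_eq_letter_commutes_replicate:
  "pres_eq R (replicate n (s, v) @ [(s', v)]) ([(s', v)] @ replicate n (s, v))"
proof (cases "s' = s \<or> n = 0")
  case True
  then show ?thesis by (auto simp: replicate_append_same pres_eq.refl)
next
  case False
  then obtain m where n: "n = Suc m" and s': "s' = (\<not> s)" by (cases n) auto
  have "replicate n (s, v) @ [(s', v)] = replicate m (s, v) @ [(s, v), (\<not> s, v)]"
    by (simp add: n s' replicate_append_same)
  also have "pres_eq R \<dots> (replicate m (s, v))"
    by (rule pres_eq_cancel_right)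
  also have "pres_eq R \<dots> ([(\<not> s, v), (s, v)] @ replicate m (s, v))"
    using pres_eq.cancel[of R "[]" "\<not> s" v "replicate m (s, v)"] by (simp add: pres_eq.sym)
  also have "\<dots> = [(s', v)] @ replicate n (s, v)"
    by (simp add: n s')
  finally show ?thesis .
qed

lemma pres_eq_letter_commutes_word_pow:
  "pres_eq R (word_pow [(s, v)] k @ [(s', v)]) ([(s', v)] @ word_pow [(s, v)] k)"
  using pres_eq_letter_commutes_replicate[of R _ s v s'] pres_eq_letter_commutes_replicate[of R _ "\<not> s" v s']
  by (simp add: word_pow_letter)

section \<open>A normal form in the torus knot group\<close>

text \<open>A block \<open>(v, i)\<close> stands for \<open>x\<^sup>i\<close> if \<open>v = False\<close> and for \<open>y\<^sup>i\<close> if \<open>v = True\<close>;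
  \<open>central_pow p k\<close> is \<open>z\<^sup>k\<close> for the central element \<open>z = x\<^sup>p = y\<^sup>q\<close>.\<close>

definition central_pow :: "int \<Rightarrow> int \<Rightarrow> bool word" where
  "central_pow p k = word_pow (word_pow gen_x p) k"

definition block_word :: "bool \<times> nat \<Rightarrow> bool word" where
  "block_word b = replicate (snd b) (True, fst b)"

definition normal_word :: "int \<Rightarrow> int \<Rightarrow> (bool \<times> nat) list \<Rightarrow> bool word" where
  "normal_word p k B = central_pow p k @ concat (map block_word B)"

definition block_bound :: "int \<Rightarrow> int \<Rightarrow> bool \<Rightarrow> nat" where
  "block_bound p q v = nat \<bar>if v then q else p\<bar>"

definition block_sign :: "int \<Rightarrow> int \<Rightarrow> bool \<Rightarrow> int" where
  "block_sign p q v = sgn (if v then q else p)"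

definition valid_blocks :: "int \<Rightarrow> int \<Rightarrow> (bool \<times> nat) list \<Rightarrow> bool" where
  "valid_blocks p q B \<longleftrightarrow> successively (\<lambda>a b. fst a \<noteq> fst b) B
     \<and> (\<forall>(v, i) \<in> set B. 0 < i \<and> i < block_bound p q v)"

lemma valid_blocks_Nil [simp]: "valid_blocks p q []"
  by (simp add: valid_blocks_def)

lemma valid_blocks_snoc:
  "valid_blocks p q (B @ [(v, i)]) \<longleftrightarrow>
     valid_blocks p q B \<and> (B \<noteq> [] \<longrightarrow> fst (last B) \<noteq> v) \<and> 0 < i \<and> i < block_bound p q v"
  by (auto simp: valid_blocks_def successively_append_iff)

lemma normal_word_snoc: "normal_word p k (B @ [b]) = normal_word p k B @ block_word b"
  by (simp add: normal_word_def)

lemma normal_word_Nil: "normal_word p 0 [] = []"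
  by (simp add: normal_word_def central_pow_def word_pow_def)

locale torus_knot =
  fixes p q :: int
  assumes nontrivial: "nontrivial_torus p q"
begin

abbreviation knot_eq :: "bool word \<Rightarrow> bool word \<Rightarrow> bool" where
  "knot_eq \<equiv> pres_eq (torus_relators p q)"

lemma abs_p_ge_2: "\<bar>p\<bar> \<ge> 2" and abs_q_ge_2: "\<bar>q\<bar> \<ge> 2"
  using nontrivial by (auto simp: nontrivial_torus_def)

lemma p_nonzero: "p \<noteq> 0" and q_nonzero: "q \<noteq> 0"
  using abs_p_ge_2 abs_q_ge_2 by auto

lemma block_bound_ge_2: "block_bound p q v \<ge> 2"
  using abs_p_ge_2 abs_q_ge_2 by (auto simp: block_bound_def)

lemma block_sign_cases: "block_sign p q v = 1 \<or> block_sign p q v = - 1"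
  using p_nonzero q_nonzero by (auto simp: block_sign_def sgn_if)

lemma x_pow_eq_y_pow: "knot_eq (word_pow gen_x p) (word_pow gen_y q)"
proof -
  let ?y = "word_pow gen_y q"
  have "knot_eq (word_pow gen_x p) ((word_pow gen_x p @ inv_word ?y) @ ?y)"
    using pres_eq_append_left[OF pres_eq_inv_word_left[of _ ?y], where a = "word_pow gen_x p"]
    by (simp add: pres_eq.sym)
  also have "knot_eq \<dots> ([] @ ?y)"
    by (rule pres_eq_append_right[OF pres_eq_relator]) (simp add: torus_relators_def)
  finally show ?thesis by simp
qed

lemma x_pow_commutes_letter: "knot_eq (word_pow gen_x p @ [(s, v)]) ([(s, v)] @ word_pow gen_x p)"
proof (cases v)
  case False
  then show ?thesis
    using pres_eq_letter_commutes_word_pow[of _ True False p s] unfolding gen_x_def by simp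
next
  case True
  have "knot_eq (word_pow gen_x p @ [(s, v)]) (word_pow gen_y q @ [(s, v)])"
    by (rule pres_eq_append_right[OF x_pow_eq_y_pow])
  also have "knot_eq \<dots> ([(s, v)] @ word_pow gen_y q)"
    using pres_eq_letter_commutes_word_pow[of _ True True q s] True unfolding gen_y_def by simp
  also have "knot_eq \<dots> ([(s, v)] @ word_pow gen_x p)"
    by (rule pres_eq_append_left[OF pres_eq.sym[OF x_pow_eq_y_pow]])
  finally show ?thesis .
qed

lemma x_pow_central: "knot_eq (word_pow gen_x p @ w) (w @ word_pow gen_x p)"
proof (induction w)
  case Nil
  then show ?case by (simp add: pres_eq.refl)
next
  case (Cons l w)
  obtain s v where l: "l = (s, v)" by (cases l)
  have "knot_eq (word_pow gen_x p @ [l] @ w) ([l] @ word_pow gen_x p @ w)"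
    using pres_eq_append_right[OF x_pow_commutes_letter, of s v w] l by simp
  also have "knot_eq \<dots> ([l] @ w @ word_pow gen_x p)"
    by (rule pres_eq_append_left[OF Cons])
  finally show ?case by simp
qed

lemma central_pow_central: "knot_eq (central_pow p k @ w) (w @ central_pow p k)"
  unfolding central_pow_def by (rule pres_eq_commuting_word_pow[OF x_pow_central])

lemma full_block_eq_central:
  "knot_eq (replicate (block_bound p q v) (True, v)) (central_pow p (block_sign p q v))"
proof -
  have full_block: "replicate (nat \<bar>r\<bar>) (True, u) = word_pow (word_pow [(True, u)] r) (sgn r)"
    if "r \<noteq> 0" for r :: int and u :: bool
    using that by (auto simp: word_pow_letter inv_word_replicate sgn_if)
  show ?thesis
  proof (cases v)
    case False
    then show ?thesis
      using full_block[OF p_nonzero, of False]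
      by (simp add: block_bound_def block_sign_def central_pow_def gen_x_def pres_eq.refl)
  next
    case True
    have "knot_eq (word_pow (word_pow gen_y q) (sgn q)) (word_pow (word_pow gen_x p) (sgn q))"
      using pres_eq.sym[OF x_pow_eq_y_pow] pres_eq_inv_word_cong[OF pres_eq.sym[OF x_pow_eq_y_pow]]
        q_nonzero
      by (auto simp: sgn_if)
    then show ?thesis
      using True full_block[OF q_nonzero, of True]
      by (simp add: block_bound_def block_sign_def central_pow_def gen_y_def)
  qed
qed

lemma normal_word_absorb_central:
  assumes "s = 1 \<or> s = - 1"
  shows "knot_eq (normal_word p k B @ central_pow p s @ w) (normal_word p (k + s) B @ w)"
proof -
  let ?b = "concat (map block_word B)"
  have "normal_word p k B @ central_pow p s @ w = central_pow p k @ (?b @ central_pow p s) @ w"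
    by (simp add: normal_word_def)
  also have "knot_eq \<dots> (central_pow p k @ (central_pow p s @ ?b) @ w)"
    by (rule pres_eq_cong[OF pres_eq.sym[OF central_pow_central]])
  also have "\<dots> = (central_pow p k @ central_pow p s) @ ?b @ w"
    by simp
  also have "knot_eq \<dots> (central_pow p (k + s) @ ?b @ w)"
    unfolding central_pow_def by (rule pres_eq_append_right[OF pres_eq_word_pow_add_sign[OF assms]])
  finally show ?thesis
    by (simp add: normal_word_def)
qed

lemma inverse_letter_eq:
  fixes v :: bool
  defines "N \<equiv> block_bound p q v" and "s \<equiv> block_sign p q v"
  shows "knot_eq [(False, v)] (central_pow p (- s) @ replicate (N - 1) (True, v))"
proof -
  have cancel: "knot_eq (central_pow p (- s) @ central_pow p s) (central_pow p (- s + s))"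
    unfolding central_pow_def s_def by (rule pres_eq_word_pow_add_sign[OF block_sign_cases])
  have "knot_eq (central_pow p (- s) @ central_pow p s @ [(False, v)]) [(False, v)]"
    using pres_eq_append_right[OF cancel, of "[(False, v)]"] by (simp add: central_pow_def)
  then have "knot_eq [(False, v)] (central_pow p (- s) @ central_pow p s @ [(False, v)])"
    by (rule pres_eq.sym)
  also have "knot_eq \<dots> (central_pow p (- s) @ replicate N (True, v) @ [(False, v)])"
    unfolding N_def s_def by (rule pres_eq_cong[OF pres_eq.sym[OF full_block_eq_central]])
  also have "\<dots> = (central_pow p (- s) @ replicate (N - 1) (True, v)) @ [(True, v), (\<not> True, v)]"
    using block_bound_ge_2[of v] unfolding N_def
    by (simp add: replicate_append_same flip: replicate_Suc)
  also have "knot_eq \<dots> (central_pow p (- s) @ replicate (N - 1) (True, v))"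
    by (rule pres_eq_cancel_right)
  finally show ?thesis .
qed

lemma normal_form_snoc_extend_block:
  assumes valid: "valid_blocks p q (B @ [(v, i)])"
  shows "\<exists>k' B'. valid_blocks p q B' \<and> knot_eq (normal_word p k (B @ [(v, i)]) @ [(True, v)]) (normal_word p k' B')"
proof (cases "Suc i < block_bound p q v")
  case True
  then have "valid_blocks p q (B @ [(v, Suc i)])"
    using valid by (simp add: valid_blocks_snoc)
  moreover have "normal_word p k (B @ [(v, i)]) @ [(True, v)] = normal_word p k (B @ [(v, Suc i)])"
    by (simp add: normal_word_snoc block_word_def replicate_append_same)
  ultimately show ?thesis
    by (intro exI[of _ k] exI[of _ "B @ [(v, Suc i)]"]) (simp add: pres_eq.refl)
next
  case False
  then have "block_bound p q v = Suc i"
    using valid by (simp add: valid_blocks_snoc)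
  then have "normal_word p k (B @ [(v, i)]) @ [(True, v)]
      = normal_word p k B @ replicate (block_bound p q v) (True, v) @ []"
    by (simp add: normal_word_snoc block_word_def replicate_append_same)
  also have "knot_eq \<dots> (normal_word p k B @ central_pow p (block_sign p q v) @ [])"
    by (rule pres_eq_cong[OF full_block_eq_central])
  also have "knot_eq \<dots> (normal_word p (k + block_sign p q v) B @ [])"
    by (rule normal_word_absorb_central[OF block_sign_cases])
  finally have "knot_eq (normal_word p k (B @ [(v, i)]) @ [(True, v)]) (normal_word p (k + block_sign p q v) B)"
    by simp
  moreover have "valid_blocks p q B"
    using valid by (simp add: valid_blocks_snoc)
  ultimately show ?thesis
    by (intro exI[of _ "k + block_sign p q v"] exI[of _ B] conjI)
qed

lemma normal_form_snoc_shrink_block: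
  assumes valid: "valid_blocks p q (B @ [(v, Suc m)])"
  shows "\<exists>k' B'. valid_blocks p q B' \<and> knot_eq (normal_word p k (B @ [(v, Suc m)]) @ [(False, v)]) (normal_word p k' B')"
proof -
  have "normal_word p k (B @ [(v, Suc m)]) @ [(False, v)]
      = (normal_word p k B @ replicate m (True, v)) @ [(True, v), (\<not> True, v)]"
    by (simp add: normal_word_snoc block_word_def replicate_append_same)
  also have "knot_eq \<dots> (normal_word p k B @ replicate m (True, v))"
    by (rule pres_eq_cancel_right)
  finally have cancelled: "knot_eq (normal_word p k (B @ [(v, Suc m)]) @ [(False, v)]) (normal_word p k (B @ [(v, m)]))"
    by (simp add: normal_word_snoc block_word_def)
  show ?thesis
  proof (cases "m = 0")
    case True
    have "valid_blocks p q B"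
      using valid by (simp add: valid_blocks_snoc)
    moreover have "normal_word p k (B @ [(v, m)]) = normal_word p k B"
      using True by (simp add: normal_word_snoc block_word_def)
    ultimately show ?thesis
      using cancelled by (intro exI[of _ k] exI[of _ B]) simp
  next
    case False
    then have "valid_blocks p q (B @ [(v, m)])"
      using valid by (simp add: valid_blocks_snoc)
    then show ?thesis
      using cancelled by (intro exI[of _ k] exI[of _ "B @ [(v, m)]"] conjI)
  qed
qed

lemma normal_form_snoc_new_generator:
  assumes valid: "valid_blocks p q B" and new: "B \<noteq> [] \<longrightarrow> fst (last B) \<noteq> v"
  shows "\<exists>k' B'. valid_blocks p q B' \<and> knot_eq (normal_word p k B @ [(s, v)]) (normal_word p k' B')"
proof (cases s)
  case True
  have "valid_blocks p q (B @ [(v, 1)])"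
    using valid new block_bound_ge_2[of v] by (simp add: valid_blocks_snoc)
  moreover have "normal_word p k B @ [(s, v)] = normal_word p k (B @ [(v, 1)])"
    using True by (simp add: normal_word_snoc block_word_def)
  ultimately show ?thesis
    by (intro exI[of _ k] exI[of _ "B @ [(v, 1)]"]) (simp add: pres_eq.refl)
next
  case False
  let ?N = "block_bound p q v" and ?s = "block_sign p q v"
  have "knot_eq (normal_word p k B @ [(s, v)])
      (normal_word p k B @ central_pow p (- ?s) @ replicate (?N - 1) (True, v))"
    using False pres_eq_append_left[OF inverse_letter_eq[of v], where a = "normal_word p k B"] by simp
  also have "knot_eq \<dots> (normal_word p (k - ?s) B @ replicate (?N - 1) (True, v))"
    using normal_word_absorb_central[of "- ?s"] block_sign_cases[of v] by auto
  also have "\<dots> = normal_word p (k - ?s) (B @ [(v, ?N - 1)])"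
    by (simp add: normal_word_snoc block_word_def)
  finally have "knot_eq (normal_word p k B @ [(s, v)]) (normal_word p (k - ?s) (B @ [(v, ?N - 1)]))" .
  moreover have "valid_blocks p q (B @ [(v, ?N - 1)])"
    using valid new block_bound_ge_2[of v] by (simp add: valid_blocks_snoc)
  ultimately show ?thesis
    by (intro exI[of _ "k - ?s"] exI[of _ "B @ [(v, ?N - 1)]"] conjI)
qed

lemma normal_form_snoc:
  assumes B: "valid_blocks p q B"
  shows "\<exists>k' B'. valid_blocks p q B' \<and> knot_eq (normal_word p k B @ [(s, v)]) (normal_word p k' B')"
proof (cases "B \<noteq> [] \<and> fst (last B) = v")
  case True
  then have "last B = (v, snd (last B))" "B = butlast B @ [last B]"
    by (simp_all add: prod_eq_iff)
  then have B_eq: "B = butlast B @ [(v, snd (last B))]"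
    by simp
  show ?thesis
  proof (cases s)
    case True
    then show ?thesis
      using normal_form_snoc_extend_block[of "butlast B" v "snd (last B)" k] B B_eq by simp
  next
    case False
    have "valid_blocks p q (butlast B @ [(v, snd (last B))])"
      using B B_eq by simp
    then obtain m where "snd (last B) = Suc m"
      by (cases "snd (last B)") (auto simp: valid_blocks_snoc)
    then show ?thesis
      using normal_form_snoc_shrink_block[of "butlast B" v m k] B B_eq False by simp
  qed
next
  case False
  show ?thesis
    by (rule normal_form_snoc_new_generator[OF B]) (use False in auto)
qed

lemma normal_form_exists: "\<exists>k B. valid_blocks p q B \<and> knot_eq w (normal_word p k B)"
proof (induction w rule: rev_induct)
  case Nil
  have "knot_eq [] (normal_word p 0 [])"
    by (simp add: normal_word_Nil pres_eq.refl)
  then show ?case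
    using valid_blocks_Nil by (intro exI[of _ 0] exI[of _ "[]"] conjI)
next
  case (snoc l w)
  then obtain k B where B: "valid_blocks p q B" and w: "knot_eq w (normal_word p k B)"
    by blast
  obtain k' B' where B': "valid_blocks p q B'" and step: "knot_eq (normal_word p k B @ [l]) (normal_word p k' B')"
    using normal_form_snoc[OF B, of k "fst l" "snd l"] by auto
  have "knot_eq (w @ [l]) (normal_word p k' B')"
    using pres_eq_append_right[OF w] step by (rule pres_eq.trans)
  then show ?case
    using B' by (intro exI[of _ k'] exI[of _ B'] conjI)
qed

end

section \<open>Lifting the action of \<open>2\<times>2\<close> matrices on directions\<close>

datatype 'a mat2 = Mat2 'a 'a 'a 'a

fun mat2_mul :: "'a::comm_ring_1 mat2 \<Rightarrow> 'a mat2 \<Rightarrow> 'a mat2" where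
  "mat2_mul (Mat2 a b c d) (Mat2 e f g h) = Mat2 (a*e+b*g) (a*f+b*h) (c*e+d*g) (c*f+d*h)"

definition mat2_one :: "'a::comm_ring_1 mat2" where
  "mat2_one = Mat2 1 0 0 1"

fun mat2_det :: "'a::comm_ring_1 mat2 \<Rightarrow> 'a" where
  "mat2_det (Mat2 a b c d) = a*d - b*c"

fun mat2_inv :: "'a::field mat2 \<Rightarrow> 'a mat2" where
  "mat2_inv (Mat2 a b c d) = Mat2 (d/(a*d-b*c)) (-b/(a*d-b*c)) (-c/(a*d-b*c)) (a/(a*d-b*c))"

definition rotation :: "real \<Rightarrow> real mat2" where
  "rotation \<phi> = Mat2 (cos \<phi>) (- sin \<phi>) (sin \<phi>) (cos \<phi>)"

text \<open>The linear action, with \<open>\<real>\<^sup>2\<close> identified with \<open>\<complex>\<close>.\<close>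

fun mat2_act :: "real mat2 \<Rightarrow> complex \<Rightarrow> complex" where
  "mat2_act (Mat2 a b c d) z = Complex (a * Re z + b * Im z) (c * Re z + d * Im z)"

lemma mat2_mul_assoc: "mat2_mul (mat2_mul A B) C = mat2_mul A (mat2_mul B C)"
  by (cases A; cases B; cases C) (simp add: algebra_simps)

lemma mat2_mul_one [simp]: "mat2_mul mat2_one A = A" "mat2_mul A mat2_one = A"
  by (cases A, simp add: mat2_one_def)+

lemma mat2_det_mult: "mat2_det (mat2_mul A B) = mat2_det A * mat2_det B"
  by (cases A; cases B) (simp add: algebra_simps)

lemma mat2_mul_inv:
  assumes "mat2_det A \<noteq> 0"
  shows "mat2_mul A (mat2_inv A) = mat2_one"
proof -
  obtain a b c d where A: "A = Mat2 a b c d" by (cases A)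
  then have "a*d - b*c \<noteq> 0" using assms by simp
  then show ?thesis by (simp add: A mat2_one_def divide_simps)
qed

lemma mat2_inv_mul:
  assumes "mat2_det A \<noteq> 0"
  shows "mat2_mul (mat2_inv A) A = mat2_one"
proof -
  obtain a b c d where A: "A = Mat2 a b c d" by (cases A)
  then have "a*d - b*c \<noteq> 0" using assms by simp
  then show ?thesis by (simp add: A mat2_one_def divide_simps)
qed

lemma mat2_det_inv_pos:
  fixes A :: "'a::linordered_field mat2"
  assumes "mat2_det A > 0"
  shows "mat2_det (mat2_inv A) > 0"
proof -
  have "mat2_det A \<noteq> 0"
    using assms by simp
  then have "mat2_det (mat2_mul A (mat2_inv A)) = 1"
    by (simp add: mat2_mul_inv mat2_one_def)
  then have "mat2_det A * mat2_det (mat2_inv A) = 1"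
    by (simp add: mat2_det_mult)
  then show ?thesis
    using assms by (metis zero_less_mult_pos zero_less_one)
qed

lemma mat2_det_rotation [simp]: "mat2_det (rotation \<phi>) = 1"
  by (simp add: rotation_def power2_eq_square[symmetric])

lemma rotation_add: "mat2_mul (rotation a) (rotation b) = rotation (a + b)"
  by (simp add: rotation_def cos_add sin_add algebra_simps)

lemma rotation_zero: "rotation 0 = mat2_one"
  by (simp add: rotation_def mat2_one_def)

lemma mat2_act_mult: "mat2_act (mat2_mul M N) z = mat2_act M (mat2_act N z)"
  by (cases M; cases N) (simp add: algebra_simps)

lemma mat2_act_one [simp]: "mat2_act mat2_one z = z"
  by (simp add: mat2_one_def complex_eq_iff)

lemma mat2_act_scale: "mat2_act M (complex_of_real r * z) = complex_of_real r * mat2_act M z"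
  by (cases M) (simp add: complex_eq_iff algebra_simps)

lemma mat2_act_nonzero:
  assumes "mat2_det M \<noteq> 0" "z \<noteq> 0"
  shows "mat2_act M z \<noteq> 0"
proof
  assume h: "mat2_act M z = 0"
  obtain a b c d where M: "M = Mat2 a b c d" by (cases M)
  let ?x = "Re z" and ?y = "Im z"
  have e1: "a * ?x + b * ?y = 0" and e2: "c * ?x + d * ?y = 0"
    using h M by (simp_all add: complex_eq_iff)
  have "(a*d - b*c) * ?x = d * (a * ?x + b * ?y) - b * (c * ?x + d * ?y)"
    "(a*d - b*c) * ?y = a * (c * ?x + d * ?y) - c * (a * ?x + b * ?y)"
    by (simp_all add: algebra_simps)
  then have "?x = 0" "?y = 0"
    using e1 e2 assms(1) M by simp_all
  then show False
    using assms(2) by (simp add: complex_eq_iff)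
qed

lemma mat2_act_rotation: "mat2_act (rotation \<phi>) z = cis \<phi> * z"
  by (simp add: rotation_def complex_eq_iff algebra_simps)

text \<open>\<open>F\<close> is a lift to \<open>\<real>\<close> of the action of \<open>M\<close> on the circle of directions,
  i.e. a lift to the universal cover.\<close>

definition lifts :: "real mat2 \<Rightarrow> (real \<Rightarrow> real) \<Rightarrow> bool" where
  "lifts M F \<longleftrightarrow> continuous_on UNIV F \<and> (\<forall>\<theta>. cis (F \<theta>) = sgn (mat2_act M (cis \<theta>)))"

definition pi_equivariant :: "(real \<Rightarrow> real) \<Rightarrow> bool" where
  "pi_equivariant F \<longleftrightarrow> (\<forall>\<theta>. F (\<theta> + pi) = F \<theta> + pi)"

definition translation :: "real \<Rightarrow> real \<Rightarrow> real" where
  "translation s = (\<lambda>\<theta>. \<theta> + s)"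

lemma translation_add: "translation a \<circ> translation b = translation (a + b)"
  and translation_zero: "translation 0 = id"
  by (auto simp: translation_def fun_eq_iff)

lemma lifts_mult:
  assumes "mat2_det N \<noteq> 0" "lifts M F" "lifts N G"
  shows "lifts (mat2_mul M N) (F \<circ> G)"
  unfolding lifts_def
proof
  show "continuous_on UNIV (F \<circ> G)"
    using assms(2,3) unfolding lifts_def comp_def by (auto intro: continuous_on_compose2[where t=UNIV])
  show "\<forall>\<theta>. cis ((F \<circ> G) \<theta>) = sgn (mat2_act (mat2_mul M N) (cis \<theta>))"
  proof
    fix \<theta>
    let ?w = "mat2_act N (cis \<theta>)"
    have "?w \<noteq> 0"
      using mat2_act_nonzero[OF assms(1)] by simp
    have sgn_w: "sgn ?w = complex_of_real (1 / cmod ?w) * ?w"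
      by (simp add: sgn_div_norm divide_inverse mult.commute scaleR_conv_of_real)
    have "sgn (mat2_act M (sgn ?w)) = sgn (complex_of_real (1 / cmod ?w) * mat2_act M ?w)"
      unfolding sgn_w mat2_act_scale ..
    also have "\<dots> = sgn (mat2_act M ?w)"
      using \<open>?w \<noteq> 0\<close> by (simp add: sgn_mult sgn_of_real)
    moreover have "cis ((F \<circ> G) \<theta>) = sgn (mat2_act M (cis (G \<theta>)))" "cis (G \<theta>) = sgn ?w"
      using assms(2,3) unfolding lifts_def by simp_all
    ultimately show "cis ((F \<circ> G) \<theta>) = sgn (mat2_act (mat2_mul M N) (cis \<theta>))"
      by (simp add: mat2_act_mult)
  qed
qed

lemma lifts_rotation: "lifts (rotation \<phi>) (translation \<phi>)"
  unfolding lifts_def translation_def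
  by (auto simp: mat2_act_rotation sgn_mult cis_mult add.commute intro!: continuous_intros)

lemma lifts_one: "lifts mat2_one id"
  unfolding lifts_def by (auto intro!: continuous_intros)

lemma lifts_add_2pi: "lifts M F \<Longrightarrow> lifts M (\<lambda>\<theta>. F \<theta> + 2 * pi * of_int k)"
  unfolding lifts_def by (auto simp: cis_mult[symmetric] intro!: continuous_intros)

lemma cis_eq_imp_2pi_multiple:
  assumes "cis a = cis b"
  shows "\<exists>k::int. a = b + 2 * pi * of_int k"
proof -
  have "cos (a - b) = 1"
    using assms by (metis cis.sel(1) cis_divide divide_self_if one_complex.sel(1) cis_neq_zero)
  then obtain n :: int where "a - b = of_int n * 2 * pi"
    using cos_one_2pi_int by blast
  then show ?thesis
    by (intro exI[of _ n]) (simp add: algebra_simps)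
qed

lemma continuous_2pi_multiple_constant:
  fixes h :: "real \<Rightarrow> real"
  assumes cont: "continuous_on UNIV h" and mult: "\<And>x. \<exists>k::int. h x = 2 * pi * of_int k"
  shows "\<exists>k::int. \<forall>x. h x = 2 * pi * of_int k"
proof -
  have "h constant_on UNIV"
  proof (rule continuous_discrete_range_constant[OF connected_UNIV cont])
    fix x :: real
    obtain k1 :: int where k1: "h x = 2 * pi * of_int k1" using mult by blast
    have "2 * pi \<le> norm (h y - h x)" if "h y \<noteq> h x" for y
    proof -
      obtain k2 :: int where k2: "h y = 2 * pi * of_int k2" using mult by blast
      then have "1 \<le> \<bar>of_int (k2 - k1) :: real\<bar>"
        using that k1 by (simp del: of_int_diff)
      then have "2 * pi * 1 \<le> 2 * pi * \<bar>of_int (k2 - k1) :: real\<bar>"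
        by (intro mult_left_mono) auto
      also have "\<dots> = norm (2 * pi * of_int (k2 - k1))"
        by (simp add: abs_mult)
      also have "\<dots> = norm (h y - h x)"
        by (simp add: k1 k2 algebra_simps)
      finally show ?thesis by simp
    qed
    then show "\<exists>e>0. \<forall>y. y \<in> UNIV \<and> h y \<noteq> h x \<longrightarrow> e \<le> norm (h y - h x)"
      by (intro exI[of _ "2 * pi"]) auto
  qed
  then obtain c where "\<And>x. h x = c"
    unfolding constant_on_def by blast
  then show ?thesis
    using mult[of 0] by auto
qed

lemma lifts_unique:
  assumes "lifts M F" "lifts M G"
  shows "\<exists>k::int. \<forall>\<theta>. F \<theta> = G \<theta> + 2 * pi * of_int k"
proof -
  have "\<exists>k::int. F \<theta> - G \<theta> = 2 * pi * of_int k" for \<theta>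
    using assms cis_eq_imp_2pi_multiple[of "F \<theta>" "G \<theta>"] unfolding lifts_def by force
  moreover have "continuous_on UNIV (\<lambda>\<theta>. F \<theta> - G \<theta>)"
    using assms unfolding lifts_def by (auto intro!: continuous_intros)
  ultimately show ?thesis
    using continuous_2pi_multiple_constant[of "\<lambda>\<theta>. F \<theta> - G \<theta>"] by (simp add: algebra_simps)
qed

lemma pi_equivariant_add_nat: "pi_equivariant F \<Longrightarrow> F (\<theta> + real n * pi) = F \<theta> + real n * pi"
proof (induction n arbitrary: \<theta>)
  case (Suc n)
  have "F (\<theta> + real (Suc n) * pi) = F ((\<theta> + real n * pi) + pi)"
    by (simp add: algebra_simps)
  also have "\<dots> = F (\<theta> + real n * pi) + pi"
    using Suc.prems unfolding pi_equivariant_def by blast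
  finally show ?case
    using Suc by (simp add: algebra_simps)
qed simp

lemma pi_equivariant_add_int: "pi_equivariant F \<Longrightarrow> F (\<theta> + of_int k * pi) = F \<theta> + of_int k * pi"
  using pi_equivariant_add_nat[of F \<theta> "nat k"] pi_equivariant_add_nat[of F "\<theta> + of_int k * pi" "nat (- k)"]
  by (cases "k \<ge> 0") (simp_all add: algebra_simps)

text \<open>Writing the action as \<open>z \<mapsto> \<alpha> z + \<beta> z\<^sup>*\<close> with \<open>|\<beta>| < |\<alpha>|\<close> when \<open>det M > 0\<close>
  gives an explicit lift, within \<open>\<pi>/2\<close> of the translation by \<open>arg \<alpha>\<close>.\<close>

fun mat2_alpha :: "real mat2 \<Rightarrow> complex" where
  "mat2_alpha (Mat2 a b c d) = Complex ((a + d) / 2) ((c - b) / 2)"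

fun mat2_beta :: "real mat2 \<Rightarrow> complex" where
  "mat2_beta (Mat2 a b c d) = Complex ((a - d) / 2) ((c + b) / 2)"

lemma mat2_act_alpha_beta: "mat2_act M z = mat2_alpha M * z + mat2_beta M * cnj z"
  by (cases M) (simp add: complex_eq_iff field_simps)

lemma mat2_alpha_beta_det: "(cmod (mat2_alpha M))\<^sup>2 - (cmod (mat2_beta M))\<^sup>2 = mat2_det M"
  by (cases M) (simp only: mat2_alpha.simps mat2_beta.simps cmod_power2 complex.sel mat2_det.simps,
      simp add: power2_eq_square field_simps)

lemma norm_beta_less_alpha: "mat2_det M > 0 \<Longrightarrow> cmod (mat2_beta M) < cmod (mat2_alpha M)"
  using mat2_alpha_beta_det[of M] by (simp add: power2_less_imp_less)

lemma norm_beta_div_alpha_less_1: "mat2_det M > 0 \<Longrightarrow> cmod (mat2_beta M / mat2_alpha M) < 1"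
  using norm_beta_less_alpha[of M] by (simp add: norm_divide divide_less_eq)

definition std_lift :: "real mat2 \<Rightarrow> real \<Rightarrow> real" where
  "std_lift M \<theta> = \<theta> + Arg (mat2_alpha M) + Arg (1 + (mat2_beta M / mat2_alpha M) * cis (-2 * \<theta>))"

lemma Re_one_plus_pos: "cmod w < 1 \<Longrightarrow> Re (1 + w) > 0"
  using abs_Re_le_cmod[of w] by simp

lemma continuous_on_Arg_one_plus_cis:
  assumes "cmod k < 1"
  shows "continuous_on UNIV (\<lambda>\<theta>. Arg (1 + k * cis (-2 * \<theta>)))"
  unfolding continuous_on_eq_continuous_at[OF open_UNIV]
proof (intro ballI)
  fix \<theta> :: real
  have "Re (1 + k * cis (-2 * \<theta>)) > 0"
    using assms by (intro Re_one_plus_pos) (simp add: norm_mult)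
  then have "continuous (at (1 + k * cis (-2 * \<theta>))) Arg"
    by (intro continuous_at_Arg) (auto simp: complex_nonpos_Reals_iff)
  moreover have "continuous (at \<theta>) (\<lambda>\<theta>. 1 + k * cis (-2 * \<theta>))"
    unfolding continuous_at by (intro tendsto_intros)
  ultimately show "continuous (at \<theta>) (\<lambda>\<theta>. Arg (1 + k * cis (-2 * \<theta>)))"
    using continuous_at_compose[of \<theta> "\<lambda>\<theta>. 1 + k * cis (-2 * \<theta>)" Arg] by (simp add: comp_def)
qed

lemma lifts_std_lift:
  assumes d: "mat2_det M > 0"
  shows "lifts M (std_lift M)"
  unfolding lifts_def
proof
  let ?k = "mat2_beta M / mat2_alpha M"
  have k1: "cmod ?k < 1" by (rule norm_beta_div_alpha_less_1[OF d])
  have anz: "mat2_alpha M \<noteq> 0"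
    using norm_beta_less_alpha[OF d] by auto
  show "continuous_on UNIV (std_lift M)"
    unfolding std_lift_def[abs_def] by (intro continuous_intros continuous_on_Arg_one_plus_cis[OF k1])
  show "\<forall>\<theta>. cis (std_lift M \<theta>) = sgn (mat2_act M (cis \<theta>))"
  proof
    fix \<theta>
    let ?u = "1 + ?k * cis (-2 * \<theta>)"
    have "Re ?u > 0"
      using k1 by (intro Re_one_plus_pos) (simp add: norm_mult norm_divide)
    then have unz: "?u \<noteq> 0" by (metis zero_complex.sel(1) less_irrefl)
    have "mat2_act M (cis \<theta>) = cis \<theta> * mat2_alpha M * ?u"
      using anz by (simp add: mat2_act_alpha_beta cis_cnj field_simps cis_mult)
    moreover have "cis (std_lift M \<theta>) = cis \<theta> * sgn (mat2_alpha M) * sgn ?u"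
      using anz unz by (simp add: std_lift_def cis_mult[symmetric] cis_Arg)
    ultimately show "cis (std_lift M \<theta>) = sgn (mat2_act M (cis \<theta>))"
      by (simp add: sgn_mult)
  qed
qed

lemma pi_equivariant_std_lift: "pi_equivariant (std_lift M)"
proof -
  have "cis (-2 * (\<theta> + pi)) = cis (-2 * \<theta>)" for \<theta>
  proof -
    have "-2 * (\<theta> + pi) = -2 * \<theta> - 2 * pi"
      by (simp add: algebra_simps)
    then show ?thesis
      by (simp only:) (simp add: cis_divide[symmetric])
  qed
  then show ?thesis
    by (simp add: pi_equivariant_def std_lift_def)
qed

lemma abs_Arg_one_plus_less_half_pi:
  assumes "cmod w < 1"
  shows "\<bar>Arg (1 + w)\<bar> < pi / 2"
  using arg_conv_arctan[OF Re_one_plus_pos[OF assms]] arctan_bounded[of "Im (1 + w) / Re (1 + w)"]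
  by auto

lemma abs_Arg_one_plus_le_quarter_pi:
  assumes "cmod w \<le> 1/2"
  shows "\<bar>Arg (1 + w)\<bar> \<le> pi / 4"
proof -
  define y where "y = Im (1 + w) / Re (1 + w)"
  have "Arg (1 + w) = arctan y"
    unfolding y_def using assms by (intro arg_conv_arctan Re_one_plus_pos) simp
  have "Re (1 + w) \<ge> 1/2" "\<bar>Im (1 + w)\<bar> \<le> 1/2"
    using abs_Re_le_cmod[of w] abs_Im_le_cmod[of w] assms by simp_all
  then have "\<bar>y\<bar> \<le> 1"
    unfolding y_def by (simp add: abs_divide divide_le_eq_1)
  then have "-1 \<le> y" "y \<le> 1"
    by (simp_all add: abs_le_iff)
  then have "arctan (-1) \<le> arctan y" "arctan y \<le> arctan 1"
    by (simp_all only: arctan_le_iff)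
  then show ?thesis
    using \<open>Arg (1 + w) = arctan y\<close> by (simp add: arctan_minus arctan_one abs_le_iff)
qed

lemma std_lift_bound:
  assumes "mat2_det M > 0"
  shows "\<bar>std_lift M \<theta> - \<theta> - Arg (mat2_alpha M)\<bar> < pi / 2"
  using abs_Arg_one_plus_less_half_pi[of "mat2_beta M / mat2_alpha M * cis (-2 * \<theta>)"]
    norm_beta_div_alpha_less_1[OF assms]
  by (simp add: std_lift_def norm_mult norm_divide)

lemma std_lift_bound_quarter_pi:
  assumes "cmod (mat2_beta M / mat2_alpha M) \<le> 1/2"
  shows "\<bar>std_lift M \<theta> - \<theta> - Arg (mat2_alpha M)\<bar> \<le> pi / 4"
  using abs_Arg_one_plus_le_quarter_pi[of "mat2_beta M / mat2_alpha M * cis (-2 * \<theta>)"] assms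
  by (simp add: std_lift_def norm_mult norm_divide)

definition pi_homeo_pair :: "(real \<Rightarrow> real) \<Rightarrow> (real \<Rightarrow> real) \<Rightarrow> bool" where
  "pi_homeo_pair h h' \<longleftrightarrow> (\<forall>\<theta>. h (h' \<theta>) = \<theta>) \<and> (\<forall>\<theta>. h' (h \<theta>) = \<theta>) \<and> pi_equivariant h"

definition conj_shift :: "(real \<Rightarrow> real) \<Rightarrow> (real \<Rightarrow> real) \<Rightarrow> real \<Rightarrow> real \<Rightarrow> real" where
  "conj_shift h h' s = (\<lambda>\<theta>. h (h' \<theta> + s))"

lemma conj_shift_add:
  "pi_homeo_pair h h' \<Longrightarrow> conj_shift h h' a \<circ> conj_shift h h' b = conj_shift h h' (a + b)"
  by (auto simp: pi_homeo_pair_def conj_shift_def fun_eq_iff algebra_simps)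

lemma conj_shift_zero: "pi_homeo_pair h h' \<Longrightarrow> conj_shift h h' 0 = id"
  by (auto simp: pi_homeo_pair_def conj_shift_def fun_eq_iff)

lemma conj_shift_int_pi:
  "pi_homeo_pair h h' \<Longrightarrow> conj_shift h h' (of_int m * pi) = translation (of_int m * pi)"
  by (auto simp: pi_homeo_pair_def conj_shift_def translation_def fun_eq_iff pi_equivariant_add_int)

lemma lifts_conj_shift:
  assumes "mat2_det H' \<noteq> 0" "lifts H h" "lifts H' h'"
  shows "lifts (mat2_mul (mat2_mul H (rotation s)) H') (conj_shift h h' s)"
proof -
  have "lifts (mat2_mul (mat2_mul H (rotation s)) H') ((h \<circ> translation s) \<circ> h')"
    using assms by (intro lifts_mult lifts_rotation) simp_all
  then show ?thesis
    by (simp add: conj_shift_def translation_def comp_def)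
qed

lemma lift_inverse_exists:
  assumes d: "mat2_det H > 0" and h: "lifts H h" "pi_equivariant h"
  shows "\<exists>h'. lifts (mat2_inv H) h' \<and> pi_homeo_pair h h'"
proof -
  have dnz: "mat2_det H \<noteq> 0" using d by simp
  let ?g = "std_lift (mat2_inv H)"
  have lg: "lifts (mat2_inv H) ?g"
    by (rule lifts_std_lift[OF mat2_det_inv_pos[OF d]])
  have "lifts mat2_one (h \<circ> ?g)"
    using lifts_mult[OF _ h(1) lg] mat2_det_inv_pos[OF d] mat2_mul_inv[OF dnz] by simp
  then obtain k :: int where k: "\<And>\<theta>. h (?g \<theta>) = \<theta> + 2 * pi * of_int k"
    using lifts_unique[OF _ lifts_one] by fastforce
  define h' where "h' \<theta> = ?g \<theta> + 2 * pi * of_int (- k)" for \<theta>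
  have lh': "lifts (mat2_inv H) h'"
    unfolding h'_def[abs_def] by (rule lifts_add_2pi[OF lg])
  have right_inv: "h (h' \<theta>) = \<theta>" for \<theta>
    using pi_equivariant_add_int[OF h(2), of "?g \<theta>" "- 2 * k"] k[of \<theta>]
    by (simp add: h'_def algebra_simps)
  have "lifts mat2_one (h' \<circ> h)"
    using lifts_mult[OF _ lh' h(1)] dnz mat2_inv_mul[OF dnz] by simp
  then obtain j :: int where j: "\<And>\<theta>. h' (h \<theta>) = \<theta> + 2 * pi * of_int j"
    using lifts_unique[OF _ lifts_one] by fastforce
  have "h 0 = h 0 + of_int (2 * j) * pi"
    using right_inv[of "h 0"] pi_equivariant_add_int[OF h(2), of 0 "2 * j"] j[of 0]
    by (simp add: algebra_simps)
  then have "j = 0" by simp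
  then show ?thesis
    using lh' right_inv j h(2) unfolding pi_homeo_pair_def by auto
qed

text \<open>An elliptic element with trace \<open>2 cos \<psi>\<close> is conjugate to the rotation by \<open>\<psi>\<close> by an
  upper triangular matrix \<open>H\<close>; the sign of \<open>c / sin \<psi>\<close> makes \<open>det H > 0\<close>, and the
  closeness hypothesis selects the lift conjugate to the translation by \<open>\<psi>\<close> itself.\<close>

lemma elliptic_conj_rotation:
  assumes det: "a*d - b*c = (1::real)" and tr: "a + d = 2 * cos \<psi>" and s: "sin \<psi> \<noteq> 0"
  defines "H \<equiv> Mat2 1 ((a - cos \<psi>) / sin \<psi>) 0 (c / sin \<psi>)"
  shows "mat2_mul (Mat2 a b c d) H = mat2_mul H (rotation \<psi>)"
proof -
  have d: "d = 2 * cos \<psi> - a" and bc: "b * c = a * d - 1"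
    using tr det by simp_all
  have "a * (a - cos \<psi>) + b * c = - (sin \<psi>)\<^sup>2 + (a - cos \<psi>) * cos \<psi>"
    unfolding bc d sin_squared_eq by (simp add: algebra_simps power2_eq_square)
  moreover have "c * (a - cos \<psi>) + d * c = c * cos \<psi>"
    unfolding d by (simp add: algebra_simps)
  ultimately show ?thesis
    using s by (simp add: H_def rotation_def field_simps power2_eq_square)
qed

lemma elliptic_lift_conj_translation:
  assumes lF: "lifts (Mat2 a b c d) F" and det: "a*d - b*c = 1" and tr: "a + d = 2 * cos \<psi>"
    and s: "sin \<psi> \<noteq> 0" and cs: "c / sin \<psi> > 0" and near: "\<bar>F \<theta>\<^sub>0 - \<theta>\<^sub>0 - \<psi>\<bar> < pi"
  shows "\<exists>h h'. pi_homeo_pair h h' \<and> F = conj_shift h h' \<psi>"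
proof -
  define H where "H = Mat2 1 ((a - cos \<psi>) / sin \<psi>) 0 (c / sin \<psi>)"
  have dH: "mat2_det H > 0" using cs by (simp add: H_def)
  have "Mat2 a b c d = mat2_mul (mat2_mul (Mat2 a b c d) H) (mat2_inv H)"
    using dH by (simp add: mat2_mul_assoc mat2_mul_inv)
  also have "mat2_mul (Mat2 a b c d) H = mat2_mul H (rotation \<psi>)"
    unfolding H_def by (rule elliptic_conj_rotation[OF det tr s])
  finally have M: "Mat2 a b c d = mat2_mul (mat2_mul H (rotation \<psi>)) (mat2_inv H)" .
  let ?h = "std_lift H"
  have lh: "lifts H ?h" by (rule lifts_std_lift[OF dH])
  obtain h' where lh': "lifts (mat2_inv H) h'" and pair: "pi_homeo_pair ?h h'"
    using lift_inverse_exists[OF dH lh pi_equivariant_std_lift] by blast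
  have "lifts (Mat2 a b c d) (conj_shift ?h h' \<psi>)"
    unfolding M using lh lh' mat2_det_inv_pos[OF dH] by (intro lifts_conj_shift) simp_all
  then obtain k :: int where k: "\<And>\<theta>. F \<theta> = conj_shift ?h h' \<psi> \<theta> + 2 * pi * of_int k"
    using lifts_unique[OF lF] by blast
  have Fk: "F \<theta> = ?h (h' \<theta> + \<psi> + of_int (2 * k) * pi)" for \<theta>
    using k[of \<theta>] pi_equivariant_add_int[OF pi_equivariant_std_lift, of H "h' \<theta> + \<psi>" "2 * k"]
    by (simp add: conj_shift_def algebra_simps)
  have "k = 0"
  proof -
    let ?u = "h' \<theta>\<^sub>0"
    have "\<theta>\<^sub>0 = ?h ?u"
      using pair by (simp add: pi_homeo_pair_def)
    then have "\<bar>F \<theta>\<^sub>0 - \<theta>\<^sub>0 - \<psi> - of_int (2 * k) * pi\<bar> < pi"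
      using std_lift_bound[OF dH, of "?u + \<psi> + of_int (2 * k) * pi"] std_lift_bound[OF dH, of ?u] Fk[of \<theta>\<^sub>0]
      unfolding abs_less_iff by linarith
    then have "\<bar>of_int (2 * k) * pi\<bar> < 2 * pi"
      using near unfolding abs_less_iff by linarith
    then have "\<bar>of_int k\<bar> < (1::real)"
      by (simp add: abs_mult)
    then show ?thesis by linarith
  qed
  then show ?thesis
    using pair k by (intro exI[of _ ?h] exI[of _ h']) (simp add: fun_eq_iff)
qed

definition dilation :: "real \<Rightarrow> real mat2" where
  "dilation t = Mat2 t 0 0 1"

lemma mat2_det_dilation: "mat2_det (dilation t) = t"
  by (simp add: dilation_def)

lemma mat2_inv_dilation: "t \<noteq> 0 \<Longrightarrow> mat2_inv (dilation t) = dilation (1 / t)"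
  by (simp add: dilation_def)

lemma mat2_alpha_dilation: "mat2_alpha (dilation t) = complex_of_real ((t + 1) / 2)"
  and mat2_beta_dilation: "mat2_beta (dilation t) = complex_of_real ((t - 1) / 2)"
  by (simp_all add: dilation_def complex_eq_iff)

lemma beta_div_alpha_dilation:
  "t > 0 \<Longrightarrow> mat2_beta (dilation t) / mat2_alpha (dilation t) = complex_of_real ((t - 1) / (t + 1))"
proof -
  assume "t > 0"
  then have "((t - 1) / 2) / ((t + 1) / 2) = (t - 1) / (t + 1)"
    by (simp add: field_simps)
  then show ?thesis
    unfolding mat2_alpha_dilation mat2_beta_dilation of_real_divide[symmetric] by simp
qed

lemma Arg_alpha_dilation: "t > 0 \<Longrightarrow> Arg (mat2_alpha (dilation t)) = 0"
  unfolding mat2_alpha_dilation by (simp only: Arg_of_real) simp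

definition dilation_lift :: "real \<Rightarrow> real \<Rightarrow> real" where
  "dilation_lift t = std_lift (dilation t)"

definition dilation_lift_inv :: "real \<Rightarrow> real \<Rightarrow> real" where
  "dilation_lift_inv t = (SOME h'. lifts (dilation (1 / t)) h' \<and> pi_homeo_pair (dilation_lift t) h')"

lemma dilation_lift_zero: "t > 0 \<Longrightarrow> dilation_lift t 0 = 0"
proof -
  assume t: "t > 0"
  have "1 + mat2_beta (dilation t) / mat2_alpha (dilation t) * cis (-2 * 0)
      = complex_of_real (1 + (t - 1) / (t + 1))"
    unfolding beta_div_alpha_dilation[OF t] by simp
  moreover have "1 + (t - 1) / (t + 1) > 0"
    using t by (simp add: field_simps)
  ultimately show ?thesis
    using t by (simp only: dilation_lift_def std_lift_def Arg_alpha_dilation Arg_of_real) simp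
qed

lemma dilation_lift_props:
  assumes "t > 0"
  shows "lifts (dilation t) (dilation_lift t)" "lifts (dilation (1 / t)) (dilation_lift_inv t)"
    "pi_homeo_pair (dilation_lift t) (dilation_lift_inv t)"
proof -
  show lh: "lifts (dilation t) (dilation_lift t)"
    unfolding dilation_lift_def using assms by (intro lifts_std_lift) (simp add: mat2_det_dilation)
  have "\<exists>h'. lifts (dilation (1 / t)) h' \<and> pi_homeo_pair (dilation_lift t) h'"
    using lift_inverse_exists[of "dilation t", OF _ lh] assms
    by (simp add: mat2_det_dilation mat2_inv_dilation dilation_lift_def pi_equivariant_std_lift)
  then show "lifts (dilation (1 / t)) (dilation_lift_inv t)" "pi_homeo_pair (dilation_lift t) (dilation_lift_inv t)"
    unfolding dilation_lift_inv_def by (metis (mono_tags, lifting) someI_ex)+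
qed

lemma dilation_lift_inv_zero: "t > 0 \<Longrightarrow> dilation_lift_inv t 0 = 0"
  using dilation_lift_props(3)[of t] dilation_lift_zero[of t]
  unfolding pi_homeo_pair_def by metis

lemma dilation_lift_bound:
  assumes "1 \<le> t" "t \<le> 3"
  shows "\<bar>dilation_lift t \<theta> - \<theta>\<bar> \<le> pi / 4"
proof -
  have "\<bar>(t - 1) / (t + 1)\<bar> \<le> 1/2"
    using assms by (simp add: abs_divide field_simps)
  then have "cmod (mat2_beta (dilation t) / mat2_alpha (dilation t)) \<le> 1/2"
    using assms by (simp only: beta_div_alpha_dilation norm_of_real)
  then show ?thesis
    using std_lift_bound_quarter_pi[of "dilation t" \<theta>] assms
    by (simp add: dilation_lift_def Arg_alpha_dilation)
qed

section \<open>A family of representations into the universal cover\<close>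

definition conj_rotation :: "real \<Rightarrow> real \<Rightarrow> real mat2" where
  "conj_rotation t \<phi> = mat2_mul (mat2_mul (dilation t) (rotation \<phi>)) (dilation (1 / t))"

definition conj_translation :: "real \<Rightarrow> real \<Rightarrow> real \<Rightarrow> real" where
  "conj_translation t = conj_shift (dilation_lift t) (dilation_lift_inv t)"

lemma conj_rotation_eq: "t \<noteq> 0 \<Longrightarrow> conj_rotation t \<phi> = Mat2 (cos \<phi>) (- t * sin \<phi>) (sin \<phi> / t) (cos \<phi>)"
  by (simp add: conj_rotation_def dilation_def rotation_def)

lemma conj_rotation_add: "t \<noteq> 0 \<Longrightarrow> mat2_mul (conj_rotation t a) (conj_rotation t b) = conj_rotation t (a + b)"
  by (simp add: conj_rotation_eq cos_add sin_add algebra_simps add_divide_distrib)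

lemma conj_rotation_zero: "t \<noteq> 0 \<Longrightarrow> conj_rotation t 0 = mat2_one"
  by (simp add: conj_rotation_eq mat2_one_def)

lemma mat2_det_conj_rotation: "t \<noteq> 0 \<Longrightarrow> mat2_det (conj_rotation t \<phi>) = 1"
  by (simp add: conj_rotation_eq power2_eq_square[symmetric])

lemma lifts_conj_rotation: "t > 0 \<Longrightarrow> lifts (conj_rotation t s) (conj_translation t s)"
  unfolding conj_rotation_def conj_translation_def
  by (rule lifts_conj_shift) (simp_all add: mat2_det_dilation dilation_lift_props)

lemma conj_translation_add: "t > 0 \<Longrightarrow> conj_translation t a \<circ> conj_translation t b = conj_translation t (a + b)"
  and conj_translation_zero: "t > 0 \<Longrightarrow> conj_translation t 0 = id"
  and conj_translation_int_pi: "t > 0 \<Longrightarrow> conj_translation t (of_int m * pi) = translation (of_int m * pi)"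
  by (simp_all add: conj_translation_def dilation_lift_props conj_shift_add conj_shift_zero conj_shift_int_pi)

definition gen_lift :: "real \<Rightarrow> real \<Rightarrow> real \<Rightarrow> bool \<Rightarrow> bool \<Rightarrow> real \<Rightarrow> real" where
  "gen_lift a\<^sub>1 a\<^sub>2 t s v =
     (if v then conj_translation t (if s then a\<^sub>2 else - a\<^sub>2) else translation (if s then a\<^sub>1 else - a\<^sub>1))"

definition gen_mat :: "real \<Rightarrow> real \<Rightarrow> real \<Rightarrow> bool \<Rightarrow> bool \<Rightarrow> real mat2" where
  "gen_mat a\<^sub>1 a\<^sub>2 t s v =
     (if v then conj_rotation t (if s then a\<^sub>2 else - a\<^sub>2) else rotation (if s then a\<^sub>1 else - a\<^sub>1))"

lemma word_hom_gen_lift: "t > 0 \<Longrightarrow> word_hom (\<circ>) id (gen_lift a\<^sub>1 a\<^sub>2 t)"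
  by unfold_locales
    (auto simp: gen_lift_def conj_translation_add conj_translation_zero translation_add translation_zero)

lemma word_hom_gen_mat: "t > 0 \<Longrightarrow> word_hom mat2_mul mat2_one (gen_mat a\<^sub>1 a\<^sub>2 t)"
  by unfold_locales
    (auto simp: gen_mat_def conj_rotation_add conj_rotation_zero rotation_add rotation_zero mat2_mul_assoc)

definition rep_lift :: "real \<Rightarrow> real \<Rightarrow> real \<Rightarrow> bool word \<Rightarrow> real \<Rightarrow> real" where
  "rep_lift a\<^sub>1 a\<^sub>2 t = word_hom.word_eval (\<circ>) id (gen_lift a\<^sub>1 a\<^sub>2 t)"

definition rep_mat :: "real \<Rightarrow> real \<Rightarrow> real \<Rightarrow> bool word \<Rightarrow> real mat2" where
  "rep_mat a\<^sub>1 a\<^sub>2 t = word_hom.word_eval mat2_mul mat2_one (gen_mat a\<^sub>1 a\<^sub>2 t)"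

context
  fixes a\<^sub>1 a\<^sub>2 t :: real
  assumes t: "t > 0"
begin

interpretation L: word_hom "(\<circ>)" id "gen_lift a\<^sub>1 a\<^sub>2 t"
  by (rule word_hom_gen_lift[OF t])

interpretation M: word_hom mat2_mul mat2_one "gen_mat a\<^sub>1 a\<^sub>2 t"
  by (rule word_hom_gen_mat[OF t])

lemma rep_lift_Nil: "rep_lift a\<^sub>1 a\<^sub>2 t [] = id"
  and rep_mat_Nil: "rep_mat a\<^sub>1 a\<^sub>2 t [] = mat2_one"
  and rep_lift_append: "rep_lift a\<^sub>1 a\<^sub>2 t (u @ v) = rep_lift a\<^sub>1 a\<^sub>2 t u \<circ> rep_lift a\<^sub>1 a\<^sub>2 t v"
  and rep_mat_append: "rep_mat a\<^sub>1 a\<^sub>2 t (u @ v) = mat2_mul (rep_mat a\<^sub>1 a\<^sub>2 t u) (rep_mat a\<^sub>1 a\<^sub>2 t v)"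
  by (simp_all add: rep_lift_def rep_mat_def L.word_eval_append M.word_eval_append)

lemma rep_lift_pres_eq:
  "pres_eq R u v \<Longrightarrow> (\<And>r. r \<in> R \<Longrightarrow> rep_lift a\<^sub>1 a\<^sub>2 t r = id) \<Longrightarrow> rep_lift a\<^sub>1 a\<^sub>2 t u = rep_lift a\<^sub>1 a\<^sub>2 t v"
  unfolding rep_lift_def by (rule L.word_eval_pres_eq)

lemma rep_lift_word_pow:
  fixes C :: "real \<Rightarrow> real \<Rightarrow> real"
  assumes "\<And>a b. C a \<circ> C b = C (a + b)" "C 0 = id" "rep_lift a\<^sub>1 a\<^sub>2 t u = C s"
  shows "rep_lift a\<^sub>1 a\<^sub>2 t (word_pow u k) = C (of_int k * s)"
  using L.word_eval_word_pow_param[of C, OF assms[unfolded rep_lift_def]] by (simp add: rep_lift_def)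

lemma rep_lift_inv_word:
  fixes C :: "real \<Rightarrow> real \<Rightarrow> real"
  assumes "\<And>a b. C a \<circ> C b = C (a + b)" "C 0 = id" "rep_lift a\<^sub>1 a\<^sub>2 t u = C s"
  shows "rep_lift a\<^sub>1 a\<^sub>2 t (inv_word u) = C (- s)"
  using L.word_eval_inv_word_param[of C, OF assms[unfolded rep_lift_def]] by (simp add: rep_lift_def)

lemma rep_lift_x_pow: "rep_lift a\<^sub>1 a\<^sub>2 t (word_pow gen_x k) = translation (of_int k * a\<^sub>1)"
  by (rule rep_lift_word_pow[OF translation_add translation_zero])
    (simp add: rep_lift_def gen_x_def L.word_eval_letter gen_lift_def)

lemma rep_lift_y_pow: "rep_lift a\<^sub>1 a\<^sub>2 t (word_pow gen_y k) = conj_translation t (of_int k * a\<^sub>2)"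
  by (rule rep_lift_word_pow[OF conj_translation_add[OF t] conj_translation_zero[OF t]])
    (simp add: rep_lift_def gen_y_def L.word_eval_letter gen_lift_def)

lemma rep_mat_x_pow: "rep_mat a\<^sub>1 a\<^sub>2 t (word_pow gen_x k) = rotation (of_int k * a\<^sub>1)"
  unfolding rep_mat_def
  by (rule M.word_eval_word_pow_param[OF rotation_add rotation_zero])
    (simp add: gen_x_def M.word_eval_letter gen_mat_def)

lemma rep_mat_y_pow: "rep_mat a\<^sub>1 a\<^sub>2 t (word_pow gen_y k) = conj_rotation t (of_int k * a\<^sub>2)"
  using t unfolding rep_mat_def
  by (intro M.word_eval_word_pow_param[OF conj_rotation_add conj_rotation_zero])
    (simp_all add: gen_y_def M.word_eval_letter gen_mat_def)

lemma lifts_rep_mat: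
  "lifts (rep_mat a\<^sub>1 a\<^sub>2 t w) (rep_lift a\<^sub>1 a\<^sub>2 t w) \<and> mat2_det (rep_mat a\<^sub>1 a\<^sub>2 t w) = 1"
proof (induction w)
  case Nil
  show ?case
    using lifts_one by (simp add: rep_lift_Nil rep_mat_Nil mat2_one_def id_def)
next
  case (Cons l w)
  obtain s v where l: "l = (s, v)" by (cases l)
  have gen: "lifts (gen_mat a\<^sub>1 a\<^sub>2 t s v) (gen_lift a\<^sub>1 a\<^sub>2 t s v)" "mat2_det (gen_mat a\<^sub>1 a\<^sub>2 t s v) = 1"
    using t by (auto simp: gen_mat_def gen_lift_def lifts_rotation lifts_conj_rotation mat2_det_conj_rotation)
  have "lifts (mat2_mul (gen_mat a\<^sub>1 a\<^sub>2 t s v) (rep_mat a\<^sub>1 a\<^sub>2 t w)) (gen_lift a\<^sub>1 a\<^sub>2 t s v \<circ> rep_lift a\<^sub>1 a\<^sub>2 t w)"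
    using Cons gen by (intro lifts_mult) simp_all
  then show ?case
    using Cons gen by (simp add: rep_mat_def rep_lift_def l mat2_det_mult comp_def)
qed

end

definition bezout_pair :: "int \<Rightarrow> int \<Rightarrow> int \<times> int" where
  "bezout_pair p q = (SOME (c, d). p * c + q * d = 1)"

lemma torus_meridian_eq:
  "torus_meridian p q = word_pow gen_y (fst (bezout_pair p q)) @ word_pow gen_x (snd (bezout_pair p q))"
  by (simp add: torus_meridian_def bezout_pair_def split_beta Let_def)

lemma bezout_pair:
  assumes "coprime p q"
  shows "p * fst (bezout_pair p q) + q * snd (bezout_pair p q) = 1"
proof -
  obtain u v where "u * p + v * q = 1"
    using bezout_int[of p q] assms by (auto simp: coprime_iff_gcd_eq_1)
  then have "\<exists>x. (\<lambda>(c, d). p * c + q * d = 1) x"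
    by (intro exI[of _ "(u, v)"]) (simp add: mult.commute)
  then have "(\<lambda>(c, d). p * c + q * d = 1) (bezout_pair p q)"
    unfolding bezout_pair_def by (rule someI_ex)
  then show ?thesis
    by (simp add: split_beta)
qed

text \<open>When \<open>p a\<^sub>1 = q a\<^sub>2 = Z \<pi>\<close>, the relation \<open>x\<^sup>p = y\<^sup>q\<close> holds for the lifts, both sides
  being the central translation by \<open>Z \<pi>\<close>.\<close>

locale torus_rep =
  fixes p q Z :: int and a\<^sub>1 a\<^sub>2 t :: real
  assumes t_pos: "t > 0"
    and angle_x: "of_int p * a\<^sub>1 = of_int Z * pi" and angle_y: "of_int q * a\<^sub>2 = of_int Z * pi"
begin

abbreviation \<rho> :: "bool word \<Rightarrow> real \<Rightarrow> real" where
  "\<rho> \<equiv> rep_lift a\<^sub>1 a\<^sub>2 t"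

lemma rep_lift_x_pow_p: "\<rho> (word_pow gen_x p) = translation (of_int Z * pi)"
  using rep_lift_x_pow[OF t_pos] angle_x by simp

lemma rep_lift_relator: "r \<in> torus_relators p q \<Longrightarrow> \<rho> r = id"
proof -
  have "\<rho> (word_pow gen_y q) = conj_translation t (of_int Z * pi)"
    using rep_lift_y_pow[OF t_pos] angle_y by simp
  then have "\<rho> (inv_word (word_pow gen_y q)) = conj_translation t (- (of_int Z * pi))"
    by (rule rep_lift_inv_word[OF t_pos conj_translation_add[OF t_pos] conj_translation_zero[OF t_pos]])
  also have "\<dots> = translation (- (of_int Z * pi))"
    using conj_translation_int_pi[OF t_pos, of "- Z"] by simp
  finally show "r \<in> torus_relators p q \<Longrightarrow> \<rho> r = id"
    by (simp add: torus_relators_def rep_lift_append[OF t_pos] rep_lift_x_pow_p translation_add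
        translation_zero)
qed

lemma rep_lift_knot_eq: "pres_eq (torus_relators p q) u v \<Longrightarrow> \<rho> u = \<rho> v"
  by (rule rep_lift_pres_eq[OF t_pos _ rep_lift_relator])

lemma rep_lift_central_pow: "\<rho> (central_pow p k) = translation (of_int k * (of_int Z * pi))"
  unfolding central_pow_def
  by (rule rep_lift_word_pow[OF t_pos translation_add translation_zero rep_lift_x_pow_p])

lemma rep_lift_normal_word:
  "\<rho> (normal_word p k B) = translation (of_int k * (of_int Z * pi)) \<circ> \<rho> (concat (map block_word B))"
  by (simp add: normal_word_def rep_lift_append[OF t_pos] rep_lift_central_pow)

text \<open>If the meridian acts as a conjugate of the translation by \<open>\<psi>\<close> with
  \<open>(p q n - 1) \<psi> = n Z \<pi>\<close>, then the surgery relator \<open>\<mu> \<lambda>\<^sup>n\<close> acts trivially: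
  the longitude \<open>\<lambda> = x\<^sup>p \<mu>\<^sup>-\<^sup>p\<^sup>q\<close> acts as the conjugate of the translation by \<open>Z \<pi> - p q \<psi>\<close>.\<close>

lemma rep_lift_surgery_relator:
  assumes pair: "pi_homeo_pair h h'" and meridian: "\<rho> (torus_meridian p q) = conj_shift h h' \<psi>"
    and rel: "(of_int p * of_int q * of_int n - 1) * \<psi> = of_int n * of_int Z * pi"
  shows "\<rho> (torus_meridian p q @ word_pow (torus_longitude p q) n) = id"
proof -
  let ?C = "conj_shift h h'"
  note C = conj_shift_add[OF pair] conj_shift_zero[OF pair]
  have "\<rho> (torus_longitude p q) = ?C (of_int Z * pi) \<circ> ?C (of_int (- (p * q)) * \<psi>)"
    unfolding torus_longitude_def rep_lift_append[OF t_pos] rep_lift_x_pow_p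
      conj_shift_int_pi[OF pair, symmetric]
    by (simp add: rep_lift_word_pow[OF t_pos C meridian])
  then have "\<rho> (word_pow (torus_longitude p q) n) = ?C (of_int n * (of_int Z * pi - of_int (p * q) * \<psi>))"
    by (intro rep_lift_word_pow[OF t_pos C]) (simp add: C)
  moreover have "\<psi> + of_int n * (of_int Z * pi - of_int (p * q) * \<psi>) = 0"
    using rel by (simp add: algebra_simps)
  ultimately show ?thesis
    by (simp add: rep_lift_append[OF t_pos] meridian C)
qed

end

section \<open>Scalar values of the block representation are isolated\<close>

text \<open>Up to the factor \<open>t\<^sup>-\<^sup>m\<close> (\<open>m\<close> the number of \<open>y\<close>-blocks), the matrix of a product of blocks
  is a polynomial in \<open>t\<close>. Its leading coefficient is not scalar, so the matrix is scalar for
  only finitely many \<open>t\<close>.\<close>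

lemma coeff_mult_degree_le_sum:
  fixes p q :: "'a::comm_ring_1 poly"
  assumes "degree p \<le> a" "degree q \<le> b"
  shows "coeff (p * q) (a + b) = coeff p a * coeff q b"
proof (cases "degree p = a \<and> degree q = b")
  case True
  then show ?thesis using coeff_mult_degree_sum[of p q] by simp
next
  case False
  then have "coeff p a * coeff q b = 0"
    using assms by (metis coeff_eq_0 le_neq_implies_less mult_zero_left mult_zero_right)
  moreover have "degree (p * q) < a + b"
    using False assms degree_mult_le[of p q] by linarith
  ultimately show ?thesis
    by (simp add: coeff_eq_0)
qed

fun mat2_degree_le :: "nat \<Rightarrow> 'a::comm_ring_1 poly mat2 \<Rightarrow> bool" where
  "mat2_degree_le n (Mat2 a b c d) \<longleftrightarrow> degree a \<le> n \<and> degree b \<le> n \<and> degree c \<le> n \<and> degree d \<le> n"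

fun mat2_coeff :: "nat \<Rightarrow> 'a::comm_ring_1 poly mat2 \<Rightarrow> 'a mat2" where
  "mat2_coeff n (Mat2 a b c d) = Mat2 (coeff a n) (coeff b n) (coeff c n) (coeff d n)"

fun mat2_const :: "'a::comm_ring_1 mat2 \<Rightarrow> 'a poly mat2" where
  "mat2_const (Mat2 a b c d) = Mat2 [:a:] [:b:] [:c:] [:d:]"

fun mat2_poly_eval :: "'a::comm_ring_1 \<Rightarrow> 'a poly mat2 \<Rightarrow> 'a mat2" where
  "mat2_poly_eval t (Mat2 a b c d) = Mat2 (poly a t) (poly b t) (poly c t) (poly d t)"

fun mat2_smult :: "'a::comm_ring_1 \<Rightarrow> 'a mat2 \<Rightarrow> 'a mat2" where
  "mat2_smult k (Mat2 a b c d) = Mat2 (k * a) (k * b) (k * c) (k * d)"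

fun is_scalar :: "'a::comm_ring_1 mat2 \<Rightarrow> bool" where
  "is_scalar (Mat2 a b c d) \<longleftrightarrow> b = 0 \<and> c = 0 \<and> a = d"

fun lower_row_zero :: "'a::comm_ring_1 mat2 \<Rightarrow> bool" where
  "lower_row_zero (Mat2 a b c d) \<longleftrightarrow> c = 0 \<and> d = 0"

lemma mat2_degree_le_mul:
  "mat2_degree_le m P \<Longrightarrow> mat2_degree_le n Q \<Longrightarrow> mat2_degree_le (m + n) (mat2_mul P Q)"
  by (cases P; cases Q) (auto intro!: degree_add_le order.trans[OF degree_mult_le] add_mono)

lemma mat2_coeff_mul:
  "mat2_degree_le m P \<Longrightarrow> mat2_degree_le n Q \<Longrightarrow> mat2_coeff (m + n) (mat2_mul P Q) = mat2_mul (mat2_coeff m P) (mat2_coeff n Q)"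
  by (cases P; cases Q) (simp add: coeff_mult_degree_le_sum)

lemma mat2_poly_eval_mul: "mat2_poly_eval t (mat2_mul P Q) = mat2_mul (mat2_poly_eval t P) (mat2_poly_eval t Q)"
  by (cases P; cases Q) simp

lemma mat2_smult_mul: "mat2_mul (mat2_smult a M) (mat2_smult b N) = mat2_smult (a * b) (mat2_mul M N)"
  by (cases M; cases N) (simp add: algebra_simps)

lemma is_scalar_smult: "k \<noteq> 0 \<Longrightarrow> is_scalar (mat2_smult k M) \<longleftrightarrow> is_scalar (M :: 'a::field mat2)"
  by (cases M) auto

lemma is_scalar_poly_eval_roots:
  assumes "\<not> is_scalar (mat2_coeff n P)"
  shows "\<exists>Q. Q \<noteq> 0 \<and> (\<forall>t. is_scalar (mat2_poly_eval t P) \<longrightarrow> poly Q t = 0)"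
proof -
  obtain a b c d where P: "P = Mat2 a b c d" by (cases P)
  then have "b \<noteq> 0 \<or> c \<noteq> 0 \<or> a - d \<noteq> 0"
    using assms by auto
  moreover have "is_scalar (mat2_poly_eval t P) \<Longrightarrow> poly b t = 0 \<and> poly c t = 0 \<and> poly (a - d) t = 0" for t
    using P by simp
  ultimately show ?thesis
    by blast
qed

definition conj_rotation_poly :: "real \<Rightarrow> real poly mat2" where
  "conj_rotation_poly \<phi> = Mat2 [:0, cos \<phi>:] [:0, 0, - sin \<phi>:] [:sin \<phi>:] [:0, cos \<phi>:]"

lemma conj_rotation_poly_eval: "t > 0 \<Longrightarrow> conj_rotation t \<phi> = mat2_smult (1 / t) (mat2_poly_eval t (conj_rotation_poly \<phi>))"
  by (simp add: conj_rotation_eq conj_rotation_poly_def power2_eq_square field_simps)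

definition block_poly :: "real \<Rightarrow> real \<Rightarrow> bool \<times> nat \<Rightarrow> real poly mat2" where
  "block_poly a\<^sub>1 a\<^sub>2 b = (if fst b then conj_rotation_poly (real (snd b) * a\<^sub>2) else mat2_const (rotation (real (snd b) * a\<^sub>1)))"

definition blocks_poly :: "real \<Rightarrow> real \<Rightarrow> (bool \<times> nat) list \<Rightarrow> real poly mat2" where
  "blocks_poly a\<^sub>1 a\<^sub>2 B = foldr (\<lambda>b. mat2_mul (block_poly a\<^sub>1 a\<^sub>2 b)) B mat2_one"

definition count_y_blocks :: "(bool \<times> nat) list \<Rightarrow> nat" where
  "count_y_blocks B = length (filter fst B)"

lemma rep_mat_blocks:
  assumes t: "t > 0"
  shows "rep_mat a\<^sub>1 a\<^sub>2 t (concat (map block_word B))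
    = mat2_smult (1 / t ^ count_y_blocks B) (mat2_poly_eval t (blocks_poly a\<^sub>1 a\<^sub>2 B))"
proof (induction B)
  case Nil
  show ?case
    using t by (simp add: rep_mat_Nil blocks_poly_def count_y_blocks_def mat2_one_def)
next
  case (Cons b B)
  obtain v i where b: "b = (v, i)" by (cases b)
  have block: "block_word (u, j) = word_pow [(True, u)] (int j)" for u j
    by (simp add: block_word_def word_pow_letter)
  have "rep_mat a\<^sub>1 a\<^sub>2 t (block_word b)
      = mat2_smult (if v then 1 / t else 1) (mat2_poly_eval t (block_poly a\<^sub>1 a\<^sub>2 b))"
  proof (cases v)
    case True
    then show ?thesis
      using rep_mat_y_pow[OF t, of a\<^sub>1 a\<^sub>2 "int i"] conj_rotation_poly_eval[OF t]
      by (simp add: b block gen_y_def block_poly_def)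
  next
    case False
    have "mat2_smult 1 M = M" for M :: "real mat2"
      by (cases M) simp
    then show ?thesis
      using rep_mat_x_pow[OF t, of a\<^sub>1 a\<^sub>2 "int i"] False
      by (cases "rotation (real i * a\<^sub>1)") (simp add: b block gen_x_def block_poly_def)
  qed
  then show ?case
    using Cons b
    by (simp add: rep_mat_append[OF t] mat2_smult_mul mat2_poly_eval_mul blocks_poly_def count_y_blocks_def)
qed

abbreviation leading_coeff :: "real \<Rightarrow> real \<Rightarrow> (bool \<times> nat) list \<Rightarrow> real mat2" where
  "leading_coeff a\<^sub>1 a\<^sub>2 B \<equiv> mat2_coeff (2 * count_y_blocks B) (blocks_poly a\<^sub>1 a\<^sub>2 B)"

lemma mat2_degree_le_blocks_poly: "mat2_degree_le (2 * count_y_blocks B) (blocks_poly a\<^sub>1 a\<^sub>2 B)"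
proof (induction B)
  case Nil
  then show ?case by (simp add: blocks_poly_def count_y_blocks_def mat2_one_def)
next
  case (Cons b B)
  have "mat2_degree_le (if fst b then 2 else 0) (block_poly a\<^sub>1 a\<^sub>2 b)"
    by (cases "rotation (real (snd b) * a\<^sub>1)")
      (auto simp: block_poly_def conj_rotation_poly_def degree_pCons_le)
  then have "mat2_degree_le ((if fst b then 2 else 0) + 2 * count_y_blocks B) (blocks_poly a\<^sub>1 a\<^sub>2 (b # B))"
    using mat2_degree_le_mul[OF _ Cons] by (simp add: blocks_poly_def)
  moreover have "(if fst b then 2 else 0) + 2 * count_y_blocks B = 2 * count_y_blocks (b # B)"
    by (simp add: count_y_blocks_def)
  ultimately show ?case
    by simp
qed

lemma leading_coeff_Cons:
  "leading_coeff a\<^sub>1 a\<^sub>2 ((v, i) # B)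
     = mat2_mul (if v then Mat2 0 (- sin (real i * a\<^sub>2)) 0 0 else rotation (real i * a\<^sub>1)) (leading_coeff a\<^sub>1 a\<^sub>2 B)"
proof (cases v)
  case True
  have "mat2_degree_le 2 (conj_rotation_poly (real i * a\<^sub>2))"
    by (simp add: conj_rotation_poly_def degree_pCons_le)
  then show ?thesis
    using True mat2_coeff_mul[OF _ mat2_degree_le_blocks_poly, of 2 _ B a\<^sub>1 a\<^sub>2]
    by (simp add: blocks_poly_def count_y_blocks_def block_poly_def conj_rotation_poly_def numeral_2_eq_2)
next
  case False
  have "mat2_degree_le 0 (mat2_const M) \<and> mat2_coeff 0 (mat2_const M) = M" for M :: "real mat2"
    by (cases M) simp
  then show ?thesis
    using False mat2_coeff_mul[OF _ mat2_degree_le_blocks_poly, of 0 _ B a\<^sub>1 a\<^sub>2]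
    by (simp add: blocks_poly_def count_y_blocks_def block_poly_def)
qed

text \<open>The invariant of the induction over the blocks; \<open>v\<close> is the generator of the first block.\<close>

definition leading_shape :: "bool \<Rightarrow> real mat2 \<Rightarrow> bool" where
  "leading_shape v T \<longleftrightarrow> \<not> is_scalar T \<and>
     (if v then lower_row_zero T \<and> T \<noteq> Mat2 0 0 0 0 else \<not> lower_row_zero T)"

lemma leading_shape_y_block:
  assumes "S \<noteq> 0" "\<not> lower_row_zero T"
  shows "leading_shape True (mat2_mul (Mat2 0 (- S) 0 0) T)"
  using assms by (cases T) (auto simp: leading_shape_def)

lemma leading_shape_x_block:
  assumes "sin \<phi> \<noteq> 0" "T = mat2_one \<or> lower_row_zero T \<and> T \<noteq> Mat2 0 0 0 0"
  shows "leading_shape False (mat2_mul (rotation \<phi>) T)"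
  using assms by (cases T) (auto simp: leading_shape_def rotation_def mat2_one_def)

lemma leading_coeff_shape:
  assumes "successively (\<lambda>a b. fst a \<noteq> fst b) B" "B \<noteq> []"
    and "\<And>v i. (v, i) \<in> set B \<Longrightarrow> sin (real i * (if v then a\<^sub>2 else a\<^sub>1)) \<noteq> 0"
  shows "leading_shape (fst (hd B)) (leading_coeff a\<^sub>1 a\<^sub>2 B)"
  using assms
proof (induction B)
  case (Cons b B)
  obtain v i where b: "b = (v, i)" by (cases b)
  have sin: "sin (real i * (if v then a\<^sub>2 else a\<^sub>1)) \<noteq> 0"
    using Cons.prems(3) b by simp
  have rest: "B = [] \<or> fst (hd B) \<noteq> v \<and> leading_shape (fst (hd B)) (leading_coeff a\<^sub>1 a\<^sub>2 B)"
    using Cons b by (auto simp: successively_Cons)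
  have one: "leading_coeff a\<^sub>1 a\<^sub>2 [] = mat2_one"
    by (simp add: blocks_poly_def count_y_blocks_def mat2_one_def)
  show ?case
  proof (cases v)
    case True
    have "\<not> lower_row_zero (leading_coeff a\<^sub>1 a\<^sub>2 B)"
      using rest True one by (auto simp: leading_shape_def mat2_one_def)
    then show ?thesis
      using leading_shape_y_block sin True b by (simp add: leading_coeff_Cons)
  next
    case False
    then show ?thesis
      using leading_shape_x_block[of "real i * a\<^sub>1"] sin rest one b
      by (auto simp: leading_coeff_Cons leading_shape_def)
  qed
qed simp

lemma finite_scalar_parameters:
  assumes "successively (\<lambda>a b. fst a \<noteq> fst b) B" "B \<noteq> []"
    and "\<And>v i. (v, i) \<in> set B \<Longrightarrow> sin (real i * (if v then a\<^sub>2 else a\<^sub>1)) \<noteq> 0"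
  shows "finite {t. t > 0 \<and> is_scalar (rep_mat a\<^sub>1 a\<^sub>2 t (concat (map block_word B)))}"
proof -
  have "\<not> is_scalar (leading_coeff a\<^sub>1 a\<^sub>2 B)"
    using leading_coeff_shape[OF assms] by (simp add: leading_shape_def)
  then obtain Q where Q: "Q \<noteq> 0" "\<And>t. is_scalar (mat2_poly_eval t (blocks_poly a\<^sub>1 a\<^sub>2 B)) \<Longrightarrow> poly Q t = 0"
    using is_scalar_poly_eval_roots by blast
  have "{t. t > 0 \<and> is_scalar (rep_mat a\<^sub>1 a\<^sub>2 t (concat (map block_word B)))} \<subseteq> {t. poly Q t = 0}"
    using Q(2) by (auto simp: rep_mat_blocks is_scalar_smult)
  then show ?thesis
    using poly_roots_finite[OF Q(1)] by (rule finite_subset)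
qed

text \<open>A matrix one of whose lifts is a translation by a multiple of \<open>\<pi>\<close> fixes every direction
  up to sign, hence is scalar.\<close>

lemma lifts_translation_int_pi_scalar:
  assumes "lifts M (translation (of_int m * pi))"
  shows "is_scalar M"
proof -
  obtain a b c d where M: "M = Mat2 a b c d" by (cases M)
  have key: "(a * cos \<theta> + b * sin \<theta>) * sin \<theta> = (c * cos \<theta> + d * sin \<theta>) * cos \<theta>" for \<theta>
  proof -
    let ?w = "mat2_act M (cis \<theta>)"
    have "cis (of_int m * pi) = complex_of_real (cos (of_int m * pi))"
      by (simp add: complex_eq_iff sin_zero_iff_int2)
    then have "sgn ?w = complex_of_real (cos (of_int m * pi)) * cis \<theta>"
      using assms unfolding lifts_def translation_def by (simp add: cis_mult[symmetric] mult.commute)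
    moreover have "?w = complex_of_real (cmod ?w) * sgn ?w"
      by (cases "?w = 0") (simp_all add: sgn_eq)
    ultimately have "?w = complex_of_real (cmod ?w * cos (of_int m * pi)) * cis \<theta>"
      by (simp add: mult.assoc)
    then obtain r :: real where "?w = complex_of_real r * cis \<theta>" by blast
    then have "a * cos \<theta> + b * sin \<theta> = r * cos \<theta>" "c * cos \<theta> + d * sin \<theta> = r * sin \<theta>"
      using M by (simp_all add: complex_eq_iff cis.ctr)
    then show ?thesis by (simp add: algebra_simps)
  qed
  have "c = 0" "b = 0"
    using key[of 0] key[of "pi/2"] by simp_all
  moreover have "(a * (sqrt 2 / 2)) * (sqrt 2 / 2) = (d * (sqrt 2 / 2)) * (sqrt 2 / 2)"
    using key[of "pi/4"] calculation by (simp add: cos_45 sin_45)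
  ultimately show ?thesis
    using M by simp
qed

section \<open>Choosing the parameter\<close>

lemma sin_add_int_pi: "sin (x + of_int k * pi) = (if even k then sin x else - sin x)"
  by (simp add: sin_add mult.commute[of _ pi])

lemma sin_mult_pi_div_eq_0_imp_dvd:
  assumes "m \<noteq> 0" and "sin (of_int k * pi / of_int m) = 0"
  shows "m dvd k"
proof -
  obtain i :: int where "of_int k * pi / of_int m = of_int i * pi"
    using assms(2) sin_zero_iff_int2 by blast
  then have "of_int k = (of_int (i * m) :: real)"
    using assms(1) by (simp add: field_simps)
  then show ?thesis
    by (simp del: of_int_mult)
qed

lemma abs_cos_diff_le: "\<bar>cos x - cos y\<bar> \<le> \<bar>x - (y::real)\<bar>"
proof -
  have "\<bar>cos x - cos y\<bar> = 2 * \<bar>sin ((x + y) / 2)\<bar> * \<bar>sin ((y - x) / 2)\<bar>"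
    by (simp add: cos_diff_cos abs_mult)
  also have "\<dots> \<le> 2 * 1 * \<bar>(y - x) / 2\<bar>"
    by (intro mult_mono abs_sin_x_le_abs_x) (auto simp: abs_sin_le_one)
  finally show ?thesis by simp
qed

lemma sin_mult_self_pos: "0 < \<bar>x::real\<bar> \<Longrightarrow> \<bar>x\<bar> < pi \<Longrightarrow> sin x * x > 0"
  using sin_gt_zero[of x] sin_gt_zero[of "- x"] by (cases "x > 0") (auto simp: mult_neg_neg)

lemma ex_near_one_product_pos:
  fixes \<alpha> \<beta> :: real
  assumes "\<alpha> + \<beta> \<noteq> 0"
  shows "\<exists>T>1. T \<le> 2 \<and> (\<forall>t. 1 \<le> t \<and> t \<le> T \<longrightarrow> (\<alpha> / t + \<beta>) * (\<alpha> + \<beta>) > 0)"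
proof -
  have "((\<lambda>t. (\<alpha> / t + \<beta>) * (\<alpha> + \<beta>)) \<longlongrightarrow> (\<alpha> / 1 + \<beta>) * (\<alpha> + \<beta>)) (at_right 1)"
    by (intro tendsto_intros) auto
  moreover have "(\<alpha> / 1 + \<beta>) * (\<alpha> + \<beta>) > 0"
    using assms by (metis div_by_1 not_real_square_gt_zero)
  ultimately have "eventually (\<lambda>t. (\<alpha> / t + \<beta>) * (\<alpha> + \<beta>) > 0) (at_right 1)"
    by (rule order_tendstoD)
  then obtain b where b: "b > 1" "\<And>t. 1 < t \<Longrightarrow> t < b \<Longrightarrow> (\<alpha> / t + \<beta>) * (\<alpha> + \<beta>) > 0"
    unfolding eventually_at_right[OF less_add_one] by auto
  define T where "T = min 2 ((1 + b) / 2)"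
  have "(\<alpha> / t + \<beta>) * (\<alpha> + \<beta>) > 0" if "1 \<le> t" "t \<le> T" for t
    using that b \<open>(\<alpha> / 1 + \<beta>) * (\<alpha> + \<beta>) > 0\<close>
    by (cases "t = 1") (auto simp: T_def)
  moreover have "T > 1" "T \<le> 2"
    using b by (auto simp: T_def)
  ultimately show ?thesis by blast
qed

lemma solvable_near_one:
  fixes G\<^sub>0 K T y :: real
  assumes K: "K \<noteq> 0" and T: "T > 1"
    and side: "(y - (G\<^sub>0 - 2 * K)) * K < 0" and close: "\<bar>y - (G\<^sub>0 - 2 * K)\<bar> < \<bar>K\<bar> * (T + 1 / T - 2)"
  shows "\<exists>t. 1 \<le> t \<and> t \<le> T \<and> G\<^sub>0 - K * (t + 1 / t) = y"
proof -
  let ?g = "\<lambda>t. G\<^sub>0 - K * (t + 1 / t)"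
  have "?g T = ?g 1 - K * (T + 1 / T - 2)"
    by (simp add: algebra_simps)
  moreover have "\<forall>x. 1 \<le> x \<and> x \<le> T \<longrightarrow> isCont ?g x"
    by (auto intro!: continuous_intros)
  ultimately show ?thesis
    using side close T K IVT[of ?g 1 y T] IVT2[of ?g T y 1]
    by (cases "K > 0") (auto simp: mult_less_0_iff abs_less_iff)
qed

lemma eventually_solvable_near_one:
  fixes G\<^sub>0 K \<alpha> \<beta> C :: real and v :: "int \<Rightarrow> real"
  assumes K: "K \<noteq> 0" and s: "\<alpha> + \<beta> \<noteq> 0"
    and side: "\<And>n. n \<ge> N\<^sub>0 \<Longrightarrow> (v n - (G\<^sub>0 - 2 * K)) * K < 0"
    and conv: "\<And>n. n \<ge> N\<^sub>0 \<Longrightarrow> \<bar>v n - (G\<^sub>0 - 2 * K)\<bar> \<le> C / of_int n"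
  shows "\<exists>N. \<forall>n\<ge>N. \<exists>t. 1 \<le> t \<and> t \<le> 2 \<and> G\<^sub>0 - K * (t + 1 / t) = v n \<and> (\<alpha> / t + \<beta>) * (\<alpha> + \<beta>) > 0"
proof -
  obtain T where T: "T > 1" "T \<le> 2" and pos: "\<And>t. 1 \<le> t \<Longrightarrow> t \<le> T \<Longrightarrow> (\<alpha> / t + \<beta>) * (\<alpha> + \<beta>) > 0"
    using ex_near_one_product_pos[OF s] by blast
  define \<epsilon> where "\<epsilon> = \<bar>K\<bar> * (T + 1 / T - 2)"
  have "T + 1 / T - 2 = (T - 1)\<^sup>2 / T"
    using T by (simp add: field_simps power2_eq_square)
  then have \<epsilon>: "\<epsilon> > 0"
    using K T by (simp add: \<epsilon>_def)
  obtain N\<^sub>1 :: int where N\<^sub>1: "of_int N\<^sub>1 > C / \<epsilon>"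
    by (meson ex_less_of_int)
  show ?thesis
  proof (intro exI[of _ "max N\<^sub>0 (max N\<^sub>1 1)"] allI impI)
    fix n assume n: "n \<ge> max N\<^sub>0 (max N\<^sub>1 1)"
    have "C < \<epsilon> * of_int N\<^sub>1"
      using N\<^sub>1 \<epsilon> by (simp add: pos_divide_less_eq mult.commute)
    also have "\<dots> \<le> \<epsilon> * of_int n"
      using n \<epsilon> by (intro mult_left_mono) auto
    finally have "C < of_int n * \<epsilon>"
      by (simp only: ac_simps)
    moreover have n_pos: "(of_int n :: real) > 0"
      using n by simp
    moreover have "of_int n * \<bar>v n - (G\<^sub>0 - 2 * K)\<bar> \<le> C"
      using conv[of n] n n_pos by (simp add: field_simps)
    ultimately have "of_int n * \<bar>v n - (G\<^sub>0 - 2 * K)\<bar> < of_int n * \<epsilon>"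
      by linarith
    then have "\<bar>v n - (G\<^sub>0 - 2 * K)\<bar> < \<epsilon>"
      using n_pos by simp
    then obtain t where "1 \<le> t" "t \<le> T" "G\<^sub>0 - K * (t + 1 / t) = v n"
      using solvable_near_one[OF K T(1) side[of n]] n unfolding \<epsilon>_def by auto
    then show "\<exists>t. 1 \<le> t \<and> t \<le> 2 \<and> G\<^sub>0 - K * (t + 1 / t) = v n \<and> (\<alpha> / t + \<beta>) * (\<alpha> + \<beta>) > 0"
      using T pos by force
  qed
qed

context torus_knot
begin

definition bez_c :: int where
  "bez_c = fst (bezout_pair p q)"

definition bez_d :: int where
  "bez_d = snd (bezout_pair p q)"

lemma bezout_identity: "p * bez_c + q * bez_d = 1"
  using bezout_pair nontrivial unfolding nontrivial_torus_def bez_c_def bez_d_def by blast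

lemma torus_meridian_bezout: "torus_meridian p q = word_pow gen_y bez_c @ word_pow gen_x bez_d"
  by (simp add: torus_meridian_eq bez_c_def bez_d_def)

definition pq :: real where
  "pq = of_int (p * q)"

lemma abs_pq_ge_4: "\<bar>pq\<bar> \<ge> 4"
proof -
  have "2 * 2 \<le> \<bar>p\<bar> * \<bar>q\<bar>"
    using abs_p_ge_2 abs_q_ge_2 by (intro mult_mono) auto
  then have "(4 :: real) \<le> of_int (\<bar>p\<bar> * \<bar>q\<bar>)"
    by linarith
  then show ?thesis
    unfolding pq_def by (simp add: abs_mult)
qed

lemma pq_nonzero: "pq \<noteq> 0"
  using abs_pq_ge_4 by auto

text \<open>The representation with parameter \<open>Z\<close> sends \<open>x\<^sup>p = y\<^sup>q\<close> to the translation by \<open>Z \<pi>\<close>;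
  the meridian \<open>y\<^sup>c x\<^sup>d\<close> (\<open>p c + q d = 1\<close>) involves the angles \<open>c a\<^sub>2\<close> and \<open>d a\<^sub>1\<close>, which add
  up to \<open>Z \<pi> / p q\<close>.\<close>

definition angle_x :: "int \<Rightarrow> real" where
  "angle_x Z = of_int Z * pi / of_int p"

definition angle_y :: "int \<Rightarrow> real" where
  "angle_y Z = of_int Z * pi / of_int q"

definition meridian_angle_y :: "int \<Rightarrow> real" where
  "meridian_angle_y Z = of_int bez_c * angle_y Z"

definition meridian_angle_x :: "int \<Rightarrow> real" where
  "meridian_angle_x Z = of_int bez_d * angle_x Z"

definition meridian_sin_prod :: "int \<Rightarrow> real" where
  "meridian_sin_prod Z = sin (meridian_angle_y Z) * sin (meridian_angle_x Z)"

definition psi_lim :: "int \<Rightarrow> real" where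
  "psi_lim Z = of_int Z * pi / pq"

lemma torus_rep_angles: "t > 0 \<Longrightarrow> torus_rep p q Z (angle_x Z) (angle_y Z) t"
  by unfold_locales (simp_all add: angle_x_def angle_y_def p_nonzero q_nonzero)

lemma meridian_angles_sum: "meridian_angle_y Z + meridian_angle_x Z = psi_lim Z"
proof -
  have "of_int p * of_int bez_c + of_int q * of_int bez_d = (1::real)"
    using bezout_identity by (metis of_int_1 of_int_add of_int_mult)
  then show ?thesis
    unfolding meridian_angle_y_def meridian_angle_x_def angle_x_def angle_y_def psi_lim_def pq_def
    using p_nonzero q_nonzero by (simp add: field_simps) (simp add: algebra_simps flip: distrib_left)
qed

text \<open>\<open>Z \<equiv> 1 (mod p q)\<close> keeps all the relevant sines away from zero.\<close>

definition admissible :: "int \<Rightarrow> bool" where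
  "admissible Z \<longleftrightarrow> (\<exists>j. Z = 1 + j * (p * q))"

lemma admissible_sin_eq_0_imp_dvd:
  assumes "admissible Z" "m = p \<or> m = q" "sin (of_int k * (of_int Z * pi / of_int m)) = 0"
  shows "m dvd k"
proof -
  obtain j where Z: "Z = 1 + j * (p * q)"
    using assms(1) unfolding admissible_def by blast
  have "m dvd k * Z"
    using assms(2,3) p_nonzero q_nonzero
    by (intro sin_mult_pi_div_eq_0_imp_dvd) (auto simp: mult.assoc)
  moreover have "m dvd k * (j * (p * q))"
    using assms(2) by auto
  ultimately show ?thesis
    by (simp add: Z algebra_simps dvd_add_left_iff)
qed

lemma admissible_sin_nonzero:
  assumes "admissible Z"
  shows "sin (meridian_angle_y Z) \<noteq> 0" "sin (meridian_angle_x Z) \<noteq> 0"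
    and "0 < i \<Longrightarrow> i < block_bound p q v \<Longrightarrow> sin (real i * (if v then angle_y Z else angle_x Z)) \<noteq> 0"
proof -
  show "sin (meridian_angle_y Z) \<noteq> 0"
  proof
    assume "sin (meridian_angle_y Z) = 0"
    then have "q dvd bez_c"
      using admissible_sin_eq_0_imp_dvd[OF assms] by (simp add: meridian_angle_y_def angle_y_def)
    then have "q dvd p * bez_c + q * bez_d" by simp
    then show False
      using bezout_identity abs_q_ge_2 by (simp add: zdvd1_eq)
  qed
  show "sin (meridian_angle_x Z) \<noteq> 0"
  proof
    assume "sin (meridian_angle_x Z) = 0"
    then have "p dvd bez_d"
      using admissible_sin_eq_0_imp_dvd[OF assms] by (simp add: meridian_angle_x_def angle_x_def)
    then have "p dvd p * bez_c + q * bez_d" by simp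
    then show False
      using bezout_identity abs_p_ge_2 by (simp add: zdvd1_eq)
  qed
  assume i: "0 < i" "i < block_bound p q v"
  show "sin (real i * (if v then angle_y Z else angle_x Z)) \<noteq> 0"
  proof
    let ?m = "if v then q else p"
    assume sin: "sin (real i * (if v then angle_y Z else angle_x Z)) = 0"
    have "?m dvd int i"
      using admissible_sin_eq_0_imp_dvd[OF assms, of ?m "int i"] sin
      by (cases v) (simp_all add: angle_x_def angle_y_def)
    then have "\<bar>?m\<bar> \<le> int i"
      using dvd_imp_le_int[of "int i" ?m] i by simp
    then show False
      using i by (simp add: block_bound_def)
  qed
qed

lemma meridian_angles_shift:
  "meridian_angle_y (Z + j * (p * q)) = meridian_angle_y Z + of_int (j * bez_c * p) * pi"
  "meridian_angle_x (Z + j * (p * q)) = meridian_angle_x Z + of_int (j * bez_d * q) * pi"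
  unfolding meridian_angle_y_def meridian_angle_x_def angle_x_def angle_y_def
  using p_nonzero q_nonzero by (simp_all add: field_simps)

lemma meridian_sin_prod_shift:
  assumes "odd j"
  shows "meridian_sin_prod (Z + j * (p * q)) = - meridian_sin_prod Z"
proof -
  have "odd (j * (p * bez_c + q * bez_d))"
    using assms bezout_identity by simp
  then have "even (j * bez_c * p) \<longleftrightarrow> odd (j * bez_d * q)"
    by (simp add: algebra_simps)
  then show ?thesis
    unfolding meridian_sin_prod_def meridian_angles_shift sin_add_int_pi by auto
qed

definition twist :: int where
  "twist = (if meridian_sin_prod 1 * pq > 0 then 1 else 1 - \<bar>p * q\<bar>)"

lemma twist_props:
  "admissible twist" "meridian_sin_prod twist * pq > 0"
  "1 \<le> \<bar>of_int twist :: real\<bar>" "\<bar>of_int twist :: real\<bar> \<le> \<bar>pq\<bar> - 1"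
proof -
  have abs_pq: "1 - \<bar>p * q\<bar> = 1 + (- sgn (p * q)) * (p * q)"
    by (cases "p * q \<ge> 0") (auto simp: sgn_if)
  have "admissible 1"
    unfolding admissible_def by (intro exI[of _ 0]) simp
  moreover have "admissible (1 - \<bar>p * q\<bar>)"
    unfolding admissible_def abs_pq by blast
  ultimately show "admissible twist"
    by (simp add: twist_def)
  have "meridian_sin_prod 1 \<noteq> 0"
    using admissible_sin_nonzero(1,2)[OF \<open>admissible 1\<close>] by (simp add: meridian_sin_prod_def)
  moreover have "meridian_sin_prod (1 - \<bar>p * q\<bar>) = - meridian_sin_prod 1"
    unfolding abs_pq using p_nonzero q_nonzero
    by (intro meridian_sin_prod_shift) (simp add: sgn_if)
  ultimately show "meridian_sin_prod twist * pq > 0"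
    using pq_nonzero by (auto simp: twist_def mult_less_0_iff zero_less_mult_iff)
  have "of_int twist = (1::real) \<or> of_int twist = 1 - \<bar>pq\<bar>"
    unfolding twist_def pq_def by simp
  then show "1 \<le> \<bar>of_int twist :: real\<bar>" "\<bar>of_int twist :: real\<bar> \<le> \<bar>pq\<bar> - 1"
    using abs_pq_ge_4 by auto
qed

text \<open>The rotation angle \<open>\<psi>\<^sub>n\<close> of the meridian for which the surgery relation holds,
  \<open>(p q n - 1) \<psi>\<^sub>n = n Z \<pi>\<close>.\<close>

definition psi :: "int \<Rightarrow> int \<Rightarrow> real" where
  "psi Z n = of_int n * of_int Z * pi / (pq * of_int n - 1)"

definition psi_ratio :: "int \<Rightarrow> real" where
  "psi_ratio n = pq * of_int n / (pq * of_int n - 1)"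

lemma pq_n_minus_1_bounds:
  assumes "n \<ge> 2"
  shows "\<bar>pq * of_int n - 1\<bar> \<ge> \<bar>pq\<bar> * of_int n - 1" "\<bar>pq * of_int n - 1\<bar> \<ge> of_int n"
    "pq * of_int n - 1 \<noteq> 0"
proof -
  have n: "(of_int n :: real) \<ge> 2" using assms by simp
  show bound: "\<bar>pq * of_int n - 1\<bar> \<ge> \<bar>pq\<bar> * of_int n - 1"
    using abs_triangle_ineq2[of "pq * of_int n" 1] n by (simp add: abs_mult)
  have "\<bar>pq\<bar> * of_int n \<ge> 4 * of_int n"
    using abs_pq_ge_4 n by (intro mult_right_mono) auto
  then show "\<bar>pq * of_int n - 1\<bar> \<ge> of_int n"
    using bound n by linarith
  then show "pq * of_int n - 1 \<noteq> 0"
    using n by auto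
qed

lemma psi_relation: "n \<ge> 2 \<Longrightarrow> (of_int p * of_int q * of_int n - 1) * psi Z n = of_int n * of_int Z * pi"
  using pq_n_minus_1_bounds(3)[of n] unfolding psi_def pq_def by simp

lemma psi_eq_ratio: "n \<ge> 2 \<Longrightarrow> psi Z n = psi_lim Z * psi_ratio n"
  unfolding psi_def psi_lim_def psi_ratio_def using pq_n_minus_1_bounds(3)[of n] pq_nonzero
  by (simp add: field_simps)

lemma psi_ratio_ne_1: "n \<ge> 2 \<Longrightarrow> psi_ratio n \<noteq> 1"
  using pq_n_minus_1_bounds(3)[of n] by (simp add: psi_ratio_def divide_eq_1_iff)

lemma psi_ratio_pos: "n \<ge> 2 \<Longrightarrow> psi_ratio n > 0"
  and psi_ratio_gt_1_iff: "n \<ge> 2 \<Longrightarrow> psi_ratio n > 1 \<longleftrightarrow> pq > 0"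
proof -
  assume "n \<ge> 2"
  then have n: "(of_int n :: real) \<ge> 2" by simp
  consider "pq \<ge> 4" | "pq \<le> - 4"
    using abs_pq_ge_4 by linarith
  then have "pq > 0 \<and> pq * of_int n > 1 \<or> pq < 0 \<and> pq * of_int n < 0"
  proof cases
    case 1
    moreover have "pq * of_int n \<ge> 4 * 2"
      using 1 n by (intro mult_mono) auto
    ultimately show ?thesis by simp
  next
    case 2
    then show ?thesis
      using n by (simp add: mult_neg_pos)
  qed
  then show "psi_ratio n > 0" "psi_ratio n > 1 \<longleftrightarrow> pq > 0"
    unfolding psi_ratio_def using n
    by (auto simp: zero_less_divide_iff less_divide_eq divide_less_eq)
qed

lemma psi_tendsto_rate:
  assumes "n \<ge> 2" and "\<bar>of_int Z :: real\<bar> \<le> \<bar>pq\<bar> - 1"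
  shows "\<bar>psi Z n - psi_lim Z\<bar> \<le> pi / of_int n"
proof -
  let ?r = "pq * of_int n - 1"
  have "psi Z n - psi_lim Z = of_int Z * pi / (pq * ?r)"
    unfolding psi_def psi_lim_def using pq_n_minus_1_bounds(3)[OF assms(1)] pq_nonzero
    by (simp add: field_simps)
  then have "\<bar>psi Z n - psi_lim Z\<bar> = (\<bar>of_int Z\<bar> / \<bar>pq\<bar>) * (pi / \<bar>?r\<bar>)"
    by (simp add: abs_mult abs_divide)
  also have "\<dots> \<le> 1 * (pi / \<bar>?r\<bar>)"
    using assms(2) pq_nonzero by (intro mult_right_mono) (auto simp: divide_le_eq_1)
  also have "\<dots> \<le> pi / of_int n"
    unfolding mult_1_left using pq_n_minus_1_bounds(2)[OF assms(1)] assms(1)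
    by (intro divide_left_mono) auto
  finally show ?thesis .
qed

context
  fixes Z :: int
  assumes Z_lower: "1 \<le> \<bar>of_int Z :: real\<bar>" and Z_upper: "\<bar>of_int Z :: real\<bar> \<le> \<bar>pq\<bar> - 1"
begin

lemma abs_psi_lim_bounds: "0 < \<bar>psi_lim Z\<bar>" "\<bar>psi_lim Z\<bar> < pi"
proof -
  have "\<bar>psi_lim Z\<bar> = \<bar>of_int Z\<bar> * pi / \<bar>pq\<bar>"
    unfolding psi_lim_def by (simp add: abs_mult abs_divide)
  moreover have "\<bar>of_int Z\<bar> * pi < \<bar>pq\<bar> * pi"
    using Z_upper by simp
  ultimately show "0 < \<bar>psi_lim Z\<bar>" "\<bar>psi_lim Z\<bar> < pi"
    using Z_lower pq_nonzero by (simp_all add: divide_less_eq)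
qed

lemma abs_psi_bounds:
  assumes "n \<ge> 2"
  shows "0 < \<bar>psi Z n\<bar>" "\<bar>psi Z n\<bar> < pi"
proof -
  let ?r = "pq * of_int n - 1"
  have n: "(of_int n :: real) \<ge> 2" using assms by simp
  have abs_psi: "\<bar>psi Z n\<bar> = of_int n * \<bar>of_int Z\<bar> * pi / \<bar>?r\<bar>"
    unfolding psi_def using n by (simp add: abs_mult abs_divide)
  then show "0 < \<bar>psi Z n\<bar>"
    using Z_lower n pq_n_minus_1_bounds(3)[OF assms] by simp
  have "\<bar>pq\<bar> * of_int n \<ge> (\<bar>of_int Z\<bar> + 1) * of_int n"
    using Z_upper n by (intro mult_right_mono) auto
  then have "of_int n * \<bar>of_int Z\<bar> < \<bar>?r\<bar>"
    using pq_n_minus_1_bounds(1)[OF assms] n by (simp add: algebra_simps)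
  then show "\<bar>psi Z n\<bar> < pi"
    unfolding abs_psi using pq_n_minus_1_bounds(3)[OF assms] by (simp add: divide_less_eq)
qed

lemma abs_psi_eq: "n \<ge> 2 \<Longrightarrow> \<bar>psi Z n\<bar> = \<bar>psi_lim Z\<bar> * psi_ratio n"
  using psi_eq_ratio[of n Z] psi_ratio_pos[of n] by (simp add: abs_mult)

lemma sin_psi_same_sign:
  assumes "n \<ge> 2"
  shows "sin (psi Z n) * sin (psi_lim Z) > 0"
proof -
  have "sin (psi Z n) * psi Z n > 0" "sin (psi_lim Z) * psi_lim Z > 0"
    using abs_psi_bounds[OF assms] abs_psi_lim_bounds by (simp_all add: sin_mult_self_pos)
  moreover have "psi Z n * psi_lim Z > 0"
  proof -
    have "psi Z n * psi_lim Z = (psi_lim Z * psi_lim Z) * psi_ratio n"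
      by (simp add: psi_eq_ratio[OF assms] algebra_simps)
    moreover have "psi_lim Z * psi_lim Z > 0"
      using abs_psi_lim_bounds(1) by (auto simp: zero_less_mult_iff)
    ultimately show ?thesis
      using psi_ratio_pos[OF assms] by (metis mult_pos_pos)
  qed
  ultimately have "(sin (psi Z n) * sin (psi_lim Z)) * (psi Z n * psi_lim Z) > 0"
    by (metis mult_pos_pos mult.commute mult.left_commute)
  then show ?thesis
    using \<open>psi Z n * psi_lim Z > 0\<close> by (simp add: zero_less_mult_iff)
qed

lemma cos_psi_side:
  assumes "n \<ge> 2"
  shows "(cos (psi Z n) - cos (psi_lim Z)) * pq < 0"
proof (cases "pq > 0")
  case True
  then have "\<bar>psi_lim Z\<bar> < \<bar>psi Z n\<bar>"
    using abs_psi_eq[OF assms] psi_ratio_gt_1_iff[OF assms] abs_psi_lim_bounds(1) by simp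
  then have "cos \<bar>psi Z n\<bar> < cos \<bar>psi_lim Z\<bar>"
    using abs_psi_bounds[OF assms] by (intro cos_monotone_0_pi) auto
  then show ?thesis
    using True by (simp add: mult_neg_pos)
next
  case False
  then have "psi_ratio n < 1" "pq < 0"
    using psi_ratio_gt_1_iff[OF assms] psi_ratio_ne_1[OF assms] pq_nonzero by auto
  then have "\<bar>psi Z n\<bar> < \<bar>psi_lim Z\<bar>"
    using abs_psi_eq[OF assms] abs_psi_lim_bounds(1) by simp
  then have "cos \<bar>psi_lim Z\<bar> < cos \<bar>psi Z n\<bar>"
    using abs_psi_lim_bounds by (intro cos_monotone_0_pi) auto
  then show ?thesis
    using \<open>pq < 0\<close> by (simp add: mult_pos_neg)
qed

lemma cos_psi_inj:
  assumes n: "n \<ge> 2" and m: "m \<ge> 2" and cos_eq: "cos (psi Z n) = cos (psi Z m)"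
  shows "n = m"
proof -
  have "\<bar>psi Z n\<bar> \<le> pi" "\<bar>psi Z m\<bar> \<le> pi"
    using abs_psi_bounds(2)[OF n] abs_psi_bounds(2)[OF m] by simp_all
  moreover have "cos \<bar>psi Z n\<bar> = cos \<bar>psi Z m\<bar>"
    using cos_eq by simp
  ultimately have "\<bar>psi Z n\<bar> = \<bar>psi Z m\<bar>"
    using cos_inj_pi[of "\<bar>psi Z n\<bar>" "\<bar>psi Z m\<bar>"] by simp
  then have "\<bar>psi_lim Z\<bar> * psi_ratio n = \<bar>psi_lim Z\<bar> * psi_ratio m"
    by (simp only: abs_psi_eq[OF n] abs_psi_eq[OF m])
  then have "psi_ratio n = psi_ratio m"
    using abs_psi_lim_bounds(1) by simp
  then have "pq * of_int n * (pq * of_int m - 1) = pq * of_int m * (pq * of_int n - 1)"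
    unfolding psi_ratio_def using pq_n_minus_1_bounds(3)[OF n] pq_n_minus_1_bounds(3)[OF m]
    by (simp add: field_simps)
  then have "m = n"
    using pq_nonzero by (simp add: algebra_simps)
  then show "n = m" ..
qed

end

end

context torus_knot
begin

lemma rep_mat_meridian:
  fixes Z :: int
  defines "A \<equiv> meridian_angle_y Z" and "B \<equiv> meridian_angle_x Z"
  assumes t: "t > 0"
  shows "rep_mat (angle_x Z) (angle_y Z) t (torus_meridian p q)
    = Mat2 (cos A * cos B - t * sin A * sin B) (- cos A * sin B - t * sin A * cos B)
        (sin A * cos B / t + cos A * sin B) (cos A * cos B - sin A * sin B / t)"
  using t unfolding torus_meridian_bezout rep_mat_append[OF t] rep_mat_y_pow[OF t] rep_mat_x_pow[OF t]
  by (simp add: conj_rotation_eq rotation_def A_def B_def meridian_angle_y_def meridian_angle_x_def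
      algebra_simps)

lemma rep_lift_meridian:
  "t > 0 \<Longrightarrow> rep_lift (angle_x Z) (angle_y Z) t (torus_meridian p q)
    = conj_translation t (meridian_angle_y Z) \<circ> translation (meridian_angle_x Z)"
  by (simp add: torus_meridian_bezout rep_lift_append rep_lift_y_pow rep_lift_x_pow
      meridian_angle_y_def meridian_angle_x_def)

text \<open>If the meridian matrix is elliptic with trace \<open>2 cos \<psi>\<close> (and the right orientation), its
  lift is conjugate to the translation by \<open>\<psi>\<close> itself rather than by \<open>\<psi> + 2 k \<pi>\<close>: at \<open>-B\<close>
  it is within \<open>\<pi>/4\<close> of \<open>A\<close>, and \<open>A + B\<close> is close to \<open>\<psi>\<close>.\<close>

lemma rep_lift_surgery_relator_trivial:
  fixes Z n :: int and t \<psi> :: real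
  defines "A \<equiv> meridian_angle_y Z" and "B \<equiv> meridian_angle_x Z"
  assumes t: "1 \<le> t" "t \<le> 3"
    and trace: "2 * cos A * cos B - sin A * sin B * (t + 1 / t) = 2 * cos \<psi>"
    and orientation: "(sin A * cos B / t + cos A * sin B) / sin \<psi> > 0" and sin_psi: "sin \<psi> \<noteq> 0"
    and near: "\<bar>A + B - \<psi>\<bar> \<le> pi / 2"
    and rel: "(of_int p * of_int q * of_int n - 1) * \<psi> = of_int n * of_int Z * pi"
  shows "rep_lift (angle_x Z) (angle_y Z) t (torus_meridian p q @ word_pow (torus_longitude p q) n) = id"
proof -
  have t0: "t > 0" using t by simp
  interpret torus_rep p q Z "angle_x Z" "angle_y Z" t
    by (rule torus_rep_angles[OF t0])
  let ?F = "\<rho> (torus_meridian p q)"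
  have lifts: "lifts (rep_mat (angle_x Z) (angle_y Z) t (torus_meridian p q)) ?F"
    and det: "mat2_det (rep_mat (angle_x Z) (angle_y Z) t (torus_meridian p q)) = 1"
    using lifts_rep_mat[OF t0] by auto
  have "?F (- B) = dilation_lift t A"
    using dilation_lift_inv_zero[OF t0]
    by (simp add: rep_lift_meridian[OF t0] A_def B_def conj_translation_def conj_shift_def translation_def)
  then have "\<bar>?F (- B) - (- B) - \<psi>\<bar> < pi"
    using dilation_lift_bound[OF t, of A] near pi_gt_zero unfolding abs_le_iff abs_less_iff by linarith
  moreover have "(cos A * cos B - t * sin A * sin B) + (cos A * cos B - sin A * sin B / t) = 2 * cos \<psi>"
    using trace t0 by (simp add: field_simps)
  ultimately obtain h h' where "pi_homeo_pair h h'" "?F = conj_shift h h' \<psi>"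
    using elliptic_lift_conj_translation[of _ _ _ _ ?F] lifts det orientation sin_psi t0
    unfolding rep_mat_meridian[OF t0] A_def B_def by (metis mat2_det.simps)
  then show ?thesis
    by (rule rep_lift_surgery_relator[OF _ _ rel])
qed

end

lemma (in torus_rep) rep_lift_normal_word_id:
  assumes "\<rho> (normal_word p k B) = id"
  shows "\<rho> (concat (map block_word B)) = translation (of_int (- k * Z) * pi)"
proof -
  let ?x = "of_int k * (of_int Z * pi)" and ?F = "\<rho> (concat (map block_word B))"
  have "?F = (translation (- ?x) \<circ> translation ?x) \<circ> ?F"
    by (simp add: translation_add translation_zero)
  also have "\<dots> = translation (- ?x)"
    using assms by (simp add: comp_assoc rep_lift_normal_word)
  finally show ?thesis
    by (simp add: algebra_simps)
qed

context torus_knot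
begin

text \<open>A value of \<open>t\<close> for which the meridian acts as a conjugate of the translation by \<open>\<psi>\<^sub>n\<close>;
  the trace of the meridian matrix is \<open>2 cos A cos B - sin A sin B (t + 1/t)\<close>.\<close>

definition surgery_parameter :: "int \<Rightarrow> int \<Rightarrow> real \<Rightarrow> bool" where
  "surgery_parameter Z n t \<longleftrightarrow> 1 \<le> t \<and> t \<le> 2 \<and>
     (let A = meridian_angle_y Z; B = meridian_angle_x Z in
      2 * cos A * cos B - sin A * sin B * (t + 1 / t) = 2 * cos (psi Z n) \<and>
      (sin A * cos B / t + cos A * sin B) * sin (psi_lim Z) > 0)"

lemma surgery_parameter_pos: "surgery_parameter Z n t \<Longrightarrow> t > 0"
  by (simp add: surgery_parameter_def)

context
  fixes Z :: int
  assumes Z_sign: "meridian_sin_prod Z * pq > 0"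
    and Z_lower: "1 \<le> \<bar>of_int Z :: real\<bar>" and Z_upper: "\<bar>of_int Z :: real\<bar> \<le> \<bar>pq\<bar> - 1"
begin

lemma cos_psi_side_sin_prod:
  assumes "n \<ge> 2"
  shows "(cos (psi Z n) - cos (psi_lim Z)) * meridian_sin_prod Z < 0"
proof -
  let ?D = "cos (psi Z n) - cos (psi_lim Z)"
  have "(?D * meridian_sin_prod Z) * (pq * pq) = (?D * pq) * (meridian_sin_prod Z * pq)"
    by (simp add: algebra_simps)
  also have "\<dots> < 0"
    using cos_psi_side[OF Z_lower Z_upper assms] Z_sign by (simp add: mult_neg_pos)
  finally have "(?D * meridian_sin_prod Z) * (pq * pq) < 0" .
  moreover have "pq * pq > 0"
    using pq_nonzero by (metis not_real_square_gt_zero)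
  ultimately show ?thesis
    by (simp add: mult_less_0_iff)
qed

lemma surgery_parameters_exist: "\<exists>N\<ge>2. \<forall>n\<ge>N. \<exists>t. surgery_parameter Z n t"
proof -
  define A where "A = meridian_angle_y Z"
  define B where "B = meridian_angle_x Z"
  define K where "K = sin A * sin B"
  have AB: "A + B = psi_lim Z"
    unfolding A_def B_def by (rule meridian_angles_sum)
  have at_one: "2 * cos (psi Z n) - (2 * cos A * cos B - 2 * K) = 2 * (cos (psi Z n) - cos (psi_lim Z))" for n
    unfolding K_def AB[symmetric] by (simp add: cos_add)
  have sin_lim: "sin A * cos B + cos A * sin B = sin (psi_lim Z)"
    unfolding AB[symmetric] by (simp add: sin_add)
  have "sin (psi_lim Z) \<noteq> 0"
    using sin_mult_self_pos[OF abs_psi_lim_bounds[OF Z_lower Z_upper]] by auto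
  moreover have "K \<noteq> 0"
    using Z_sign by (auto simp: K_def A_def B_def meridian_sin_prod_def)
  moreover have "(2 * cos (psi Z n) - (2 * cos A * cos B - 2 * K)) * K < 0" if "n \<ge> 2" for n
  proof -
    have "(2 * cos (psi Z n) - (2 * cos A * cos B - 2 * K)) * K
        = 2 * ((cos (psi Z n) - cos (psi_lim Z)) * meridian_sin_prod Z)"
      unfolding at_one by (simp add: K_def A_def B_def meridian_sin_prod_def)
    then show ?thesis
      using cos_psi_side_sin_prod[OF that] by linarith
  qed
  moreover have "\<bar>2 * cos (psi Z n) - (2 * cos A * cos B - 2 * K)\<bar> \<le> 2 * pi / of_int n" if "n \<ge> 2" for n
    using abs_cos_diff_le[of "psi Z n" "psi_lim Z"] psi_tendsto_rate[OF that Z_upper]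
    unfolding at_one abs_mult by simp
  ultimately obtain N where N: "\<And>n. n \<ge> N \<Longrightarrow> \<exists>t. 1 \<le> t \<and> t \<le> 2 \<and>
      2 * cos A * cos B - K * (t + 1 / t) = 2 * cos (psi Z n) \<and>
      (sin A * cos B / t + cos A * sin B) * (sin A * cos B + cos A * sin B) > 0"
    using eventually_solvable_near_one[of K "sin A * cos B" "cos A * sin B" 2 "\<lambda>n. 2 * cos (psi Z n)"
        "2 * cos A * cos B" "2 * pi"] sin_lim by fastforce
  show ?thesis
    using N sin_lim
    by (intro exI[of _ "max N 2"]) (auto simp: surgery_parameter_def Let_def A_def B_def K_def)
qed

lemma surgery_parameter_inj:
  "surgery_parameter Z n t \<Longrightarrow> surgery_parameter Z m t \<Longrightarrow> n \<ge> 2 \<Longrightarrow> m \<ge> 2 \<Longrightarrow> n = m"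
  using cos_psi_inj[OF Z_lower Z_upper] by (auto simp: surgery_parameter_def Let_def)

lemma surgery_parameter_kills_relators:
  assumes n: "n \<ge> 2" and t: "surgery_parameter Z n t" and r: "r \<in> surgery_relators p q n"
  shows "rep_lift (angle_x Z) (angle_y Z) t r = id"
proof -
  define A where "A = meridian_angle_y Z"
  define B where "B = meridian_angle_x Z"
  have t_bounds: "1 \<le> t" "t \<le> 2" and
    trace: "2 * cos A * cos B - sin A * sin B * (t + 1 / t) = 2 * cos (psi Z n)" and
    orient: "(sin A * cos B / t + cos A * sin B) * sin (psi_lim Z) > 0"
    using t by (simp_all add: surgery_parameter_def Let_def A_def B_def)
  interpret torus_rep p q Z "angle_x Z" "angle_y Z" t
    using t_bounds by (intro torus_rep_angles) simp
  have same_sign: "sin (psi Z n) * sin (psi_lim Z) > 0"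
    by (rule sin_psi_same_sign[OF Z_lower Z_upper n])
  have "(sin A * cos B / t + cos A * sin B) / sin (psi Z n) > 0"
  proof -
    have "((sin A * cos B / t + cos A * sin B) * sin (psi_lim Z)) * (sin (psi Z n) * sin (psi_lim Z)) > 0"
      using orient same_sign by simp
    then have "(sin A * cos B / t + cos A * sin B) * sin (psi Z n) > 0"
      by (simp add: zero_less_mult_iff mult_less_0_iff) (auto simp: not_less_iff_gr_or_eq)
    then show ?thesis
      by (simp add: zero_less_divide_iff zero_less_mult_iff)
  qed
  moreover have "\<bar>A + B - psi Z n\<bar> \<le> pi / 2"
  proof -
    have "\<bar>A + B - psi Z n\<bar> \<le> pi / of_int n"
      using psi_tendsto_rate[OF n Z_upper] meridian_angles_sum[of Z] by (simp add: A_def B_def abs_minus_commute)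
    also have "\<dots> \<le> pi / 2"
      using n by (intro divide_left_mono) auto
    finally show ?thesis .
  qed
  moreover have "sin (psi Z n) \<noteq> 0"
    using same_sign by auto
  ultimately have "\<rho> (torus_meridian p q @ word_pow (torus_longitude p q) n) = id"
    using rep_lift_surgery_relator_trivial[of t Z "psi Z n" n] t_bounds trace psi_relation[OF n]
    by (simp add: A_def B_def)
  then show ?thesis
    using r rep_lift_relator by (auto simp: surgery_relators_def)
qed

lemma surgery_parameter_sequence:
  "\<exists>N \<tau>. N \<ge> 2 \<and> inj_on \<tau> {N..} \<and> (\<forall>n\<ge>N. surgery_parameter Z n (\<tau> n))"
proof -
  obtain N where N: "N \<ge> 2" "\<And>n. n \<ge> N \<Longrightarrow> \<exists>t. surgery_parameter Z n t"
    using surgery_parameters_exist by blast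
  define \<tau> where "\<tau> n = (SOME t. surgery_parameter Z n t)" for n
  have \<tau>: "surgery_parameter Z n (\<tau> n)" if "n \<ge> N" for n
    unfolding \<tau>_def using N(2)[OF that] by (rule someI_ex)
  have "inj_on \<tau> {N..}"
    using \<tau> surgery_parameter_inj N(1) by (intro inj_onI) (metis atLeast_iff order.trans)
  then show ?thesis
    using N(1) \<tau> by blast
qed

lemma surgery_trivial_imp_rep_lift_id:
  assumes "n \<ge> 2" "surgery_parameter Z n t" "trivial_in (surgery_relators p q n) g"
  shows "rep_lift (angle_x Z) (angle_y Z) t g = id"
proof -
  have "t > 0"
    using surgery_parameter_pos[OF assms(2)] .
  then have "rep_lift (angle_x Z) (angle_y Z) t g = rep_lift (angle_x Z) (angle_y Z) t []"
    using assms(3) surgery_parameter_kills_relators[OF assms(1,2)] unfolding trivial_in_def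
    by (intro rep_lift_pres_eq) auto
  then show ?thesis
    using rep_lift_Nil[OF \<open>t > 0\<close>] by simp
qed

end

lemma finite_scalar_block_parameters:
  assumes "admissible Z" "valid_blocks p q B" "B \<noteq> []"
  shows "finite {t. t > 0 \<and> is_scalar (rep_mat (angle_x Z) (angle_y Z) t (concat (map block_word B)))}"
proof (rule finite_scalar_parameters)
  show "successively (\<lambda>a b. fst a \<noteq> fst b) B" "B \<noteq> []"
    using assms(2,3) by (simp_all add: valid_blocks_def)
  fix v i assume "(v, i) \<in> set B"
  then have "0 < i" "i < block_bound p q v"
    using assms(2) by (auto simp: valid_blocks_def)
  then show "sin (real i * (if v then angle_y Z else angle_x Z)) \<noteq> 0"
    by (rule admissible_sin_nonzero(3)[OF assms(1)])
qed

lemma finite_trivializing_parameters: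
  assumes "admissible Z" "Z \<noteq> 0" and nontriv: "\<not> trivial_in (torus_relators p q) g"
  shows "finite {t. t > 0 \<and> rep_lift (angle_x Z) (angle_y Z) t g = id}"
proof -
  obtain k B where B: "valid_blocks p q B" and g: "knot_eq g (normal_word p k B)"
    using normal_form_exists by blast
  let ?blocks = "concat (map block_word B)"
  have blocks: "rep_lift (angle_x Z) (angle_y Z) t ?blocks = translation (of_int (- k * Z) * pi)"
    if "t > 0" "rep_lift (angle_x Z) (angle_y Z) t g = id" for t
    using torus_rep.rep_lift_normal_word_id[OF torus_rep_angles] torus_rep.rep_lift_knot_eq[OF torus_rep_angles g]
      that by metis
  show ?thesis
  proof (cases "B = []")
    case True
    have "k \<noteq> 0"
      using nontriv g True by (auto simp: trivial_in_def normal_word_def central_pow_def)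
    then have "translation (of_int (- k * Z) * pi) \<noteq> id"
      using assms(2) by (auto simp: translation_def fun_eq_iff)
    then have "{t. t > 0 \<and> rep_lift (angle_x Z) (angle_y Z) t g = id} = {}"
      using blocks True rep_lift_Nil by fastforce
    then show ?thesis
      by (metis finite.emptyI)
  next
    case False
    have "{t. t > 0 \<and> rep_lift (angle_x Z) (angle_y Z) t g = id}
        \<subseteq> {t. t > 0 \<and> is_scalar (rep_mat (angle_x Z) (angle_y Z) t ?blocks)}"
    proof (intro subsetI CollectI conjI)
      fix t assume "t \<in> {t. t > 0 \<and> rep_lift (angle_x Z) (angle_y Z) t g = id}"
      then have "t > 0" "rep_lift (angle_x Z) (angle_y Z) t g = id" by simp_all
      then show "t > 0" "is_scalar (rep_mat (angle_x Z) (angle_y Z) t ?blocks)"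
        using blocks lifts_rep_mat[of t] lifts_translation_int_pi_scalar by metis+
    qed
    then show ?thesis
      using finite_scalar_block_parameters[OF assms(1) B False] by (rule finite_subset)
  qed
qed

end

theorem proposition4p6:
  fixes p q :: int and g :: "bool word"
  assumes "nontrivial_torus p q"
    and "\<not> trivial_in (torus_relators p q) g"
  shows "\<exists>N::int. N > 0 \<and> (\<forall>n::int. n \<ge> N \<longrightarrow> \<not> trivial_in (surgery_relators p q n) g)"
proof -
  interpret torus_knot p q
    by (rule torus_knot.intro[OF assms(1)])
  let ?Z = twist
  obtain N \<tau> where N: "N \<ge> 2" and inj: "inj_on \<tau> {N..}" and \<tau>: "\<And>n. n \<ge> N \<Longrightarrow> surgery_parameter ?Z n (\<tau> n)"
    using surgery_parameter_sequence[OF twist_props(2-4)] by blast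
  let ?S = "{t. t > 0 \<and> rep_lift (angle_x ?Z) (angle_y ?Z) t g = id}"
  have "finite ?S"
    using twist_props(1,3) assms(2) by (intro finite_trivializing_parameters) auto
  then have "finite (\<tau> -` ?S \<inter> {N..})"
    using inj by (rule finite_vimage_IntI)
  then obtain M where M: "\<And>n. n \<in> \<tau> -` ?S \<inter> {N..} \<Longrightarrow> n \<le> M"
    by (meson bdd_above_finite bdd_above_def)
  have "n \<le> M" if n: "n \<ge> N" and trivial: "trivial_in (surgery_relators p q n) g" for n
  proof (rule M)
    show "n \<in> \<tau> -` ?S \<inter> {N..}"
      using n N surgery_parameter_pos[OF \<tau>[OF n]]
        surgery_trivial_imp_rep_lift_id[OF twist_props(2-4) _ \<tau>[OF n] trivial]
      by simp
  qed
  then show ?thesis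
    using N by (intro exI[of _ "max N (M + 1)"]) force
qed

end
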